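(* Let $N\geq2$, $p=4+\frac4N$, let $g$ satisfy (g1) $g\in C(\mathbb{R},\mathbb{R})$; (g2) $\lim_{s\to0}g(s)/s=0$; (g3) $\lim_{|s|\to\infty}|g(s)|/|s|^{p-1}=0$; (g4) there is $s_0>0$ with $G(s_0)>0$, and let $\lambda\in(-\infty,\lambda_0)$. Then $\Gamma_1(\lambda)\neq\emptyset$. If in addition (g5) $g(-s)=-g(s)$ for all $s$ holds, then $\Gamma_k(\lambda)\neq\emptyset$ for every $k\geq1$.
   Context: $G(s)=\int_0^sg(t)dt$. $f\in C^\infty(\mathbb{R})$ is the odd function with $f(0)=0$, $f'(t)=(1+2f(t)^2)^{-1/2}$. $H_r^1(\mathbb{R}^N)$ denotes radial $H^1$ functions. $J_\lambda(v)=\frac12\|\nabla v\|_2^2+\frac{e^\lambda}{2}\|f(v)\|_2^2-\int_{\mathbb{R}^N}G(f(v))dx$. $\lambda_0=\ln(2\sup_{s\neq0}G(s)/s^2)$ if this supremum is finite, $\lambda_0=+\infty$ otherwise. $D_k=\{x\in\mathbb{R}^k:|x|\le1\}$, $\partial D_k=\{|x|=1\}$. $\Gamma_1(\lambda)=\{\gamma\in C([0,1],H_r^1(\mathbb{R}^N)):\gamma(0)=0,\ J_\lambda(\gamma(1))<0\}$; for $k\geq2$, $\Gamma_k(\lambda)=\{\gamma\in C(D_k,H_r^1(\mathbb{R}^N)):\gamma(-\xi)=-\gamma(\xi)\ \forall\xi\in D_k,\ J_\lambda(\gamma(\xi))<0\ \forall\xi\in\partial D_k\}$. *)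

theory Defs
  imports "HOL-Analysis.Analysis"
begin

definition Gprim :: "(real \<Rightarrow> real) \<Rightarrow> real \<Rightarrow> real" where
  "Gprim g s = (LBINT t=0..s. g t)"

definition fcv :: "real \<Rightarrow> real" where
  "fcv = (THE f. f 0 = 0 \<and>
            (\<forall>t. (f has_real_derivative (1 / sqrt (1 + 2 * (f t)\<^sup>2))) (at t)))"

definition lambda0 :: "(real \<Rightarrow> real) \<Rightarrow> ereal" where
  "lambda0 g = (if bdd_above {Gprim g s / s\<^sup>2 | s. s \<noteq> 0}
                then ereal (ln (2 * Sup {Gprim g s / s\<^sup>2 | s. s \<noteq> 0}))
                else \<infinity>)"

text \<open>C^infinity: all iterated partial derivatives exist and are continuous.\<close>
definition smooth_fun :: "('a::euclidean_space \<Rightarrow> real) \<Rightarrow> bool" where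
  "smooth_fun \<phi> \<longleftrightarrow> (\<exists>S. \<phi> \<in> S \<and>
     (\<forall>\<psi>\<in>S. continuous_on UNIV \<psi> \<and>
        (\<forall>i\<in>Basis. \<exists>dphi\<in>S. \<forall>x. ((\<lambda>t. \<psi> (x + t *\<^sub>R i)) has_real_derivative dphi x) (at 0))))"

definition test_fun :: "('a::euclidean_space \<Rightarrow> real) \<Rightarrow> bool" where
  "test_fun \<phi> \<longleftrightarrow> smooth_fun \<phi> \<and> compact (closure {x. \<phi> x \<noteq> 0})"

definition is_weak_grad :: "('a::euclidean_space \<Rightarrow> real) \<Rightarrow> ('a \<Rightarrow> 'a) \<Rightarrow> bool" where
  "is_weak_grad v w \<longleftrightarrow>
     w \<in> borel_measurable lborel \<and> integrable lborel (\<lambda>x. (norm (w x))\<^sup>2) \<and>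
     (\<forall>\<phi> dphi i. test_fun \<phi> \<and> i \<in> Basis \<and>
        (\<forall>x. ((\<lambda>t. \<phi> (x + t *\<^sub>R i)) has_real_derivative dphi x) (at 0)) \<longrightarrow>
        (\<integral>x. v x * dphi x \<partial>lborel) = - (\<integral>x. (w x \<bullet> i) * \<phi> x \<partial>lborel))"

definition H1 :: "('a::euclidean_space \<Rightarrow> real) set" where
  "H1 = {v. v \<in> borel_measurable lborel \<and> integrable lborel (\<lambda>x. (v x)\<^sup>2) \<and>
            (\<exists>w. is_weak_grad v w)}"

definition radial :: "('a::euclidean_space \<Rightarrow> real) \<Rightarrow> bool" where
  "radial v \<longleftrightarrow> (\<forall>x y. norm x = norm y \<longrightarrow> v x = v y)"

definition H1r :: "('a::euclidean_space \<Rightarrow> real) set" where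
  "H1r = {v \<in> H1. radial v}"

definition wgrad :: "('a::euclidean_space \<Rightarrow> real) \<Rightarrow> 'a \<Rightarrow> 'a" where
  "wgrad v = (SOME w. is_weak_grad v w)"

definition grad_sq :: "('a::euclidean_space \<Rightarrow> real) \<Rightarrow> real" where
  "grad_sq v = (\<integral>x. (norm (wgrad v x))\<^sup>2 \<partial>lborel)"

definition H1norm :: "('a::euclidean_space \<Rightarrow> real) \<Rightarrow> real" where
  "H1norm v = sqrt ((\<integral>x. (v x)\<^sup>2 \<partial>lborel) + grad_sq v)"

definition cont_H1r :: "'k::metric_space set \<Rightarrow> ('k \<Rightarrow> 'a::euclidean_space \<Rightarrow> real) \<Rightarrow> bool" where
  "cont_H1r D \<gamma> \<longleftrightarrow> (\<forall>\<xi>\<in>D. \<gamma> \<xi> \<in> H1r) \<and>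
     (\<forall>\<xi>\<in>D. \<forall>\<epsilon>>0. \<exists>\<delta>>0. \<forall>\<eta>\<in>D. dist \<eta> \<xi> < \<delta> \<longrightarrow> H1norm (\<lambda>x. \<gamma> \<eta> x - \<gamma> \<xi> x) < \<epsilon>)"

definition Jfun :: "(real \<Rightarrow> real) \<Rightarrow> real \<Rightarrow> ('a::euclidean_space \<Rightarrow> real) \<Rightarrow> real" where
  "Jfun g lam v = 1/2 * grad_sq v + exp lam / 2 * (\<integral>x. (fcv (v x))\<^sup>2 \<partial>lborel)
                   - (\<integral>x. Gprim g (fcv (v x)) \<partial>lborel)"

definition Gamma1 :: "(real \<Rightarrow> real) \<Rightarrow> real \<Rightarrow> (real \<Rightarrow> 'a::euclidean_space \<Rightarrow> real) set" where
  "Gamma1 g lam = {\<gamma>. cont_H1r {0..1} \<gamma> \<and> \<gamma> 0 = (\<lambda>x. 0) \<and> Jfun g lam (\<gamma> 1) < 0}"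

text \<open>Gamma_k for k = DIM('k) >= 2: D_k is the closed unit ball of 'k.\<close>
definition Gammak :: "(real \<Rightarrow> real) \<Rightarrow> real \<Rightarrow> ('k::euclidean_space \<Rightarrow> 'a::euclidean_space \<Rightarrow> real) set" where
  "Gammak g lam = {\<gamma>. cont_H1r (cball 0 1) \<gamma> \<and>
      (\<forall>\<xi>\<in>cball 0 1. \<gamma> (-\<xi>) = (\<lambda>x. - \<gamma> \<xi> x)) \<and>
      (\<forall>\<xi>\<in>sphere 0 1. Jfun g lam (\<gamma> \<xi>) < 0)}"

end

theory Submission
  imports Defs "HOL-Computational_Algebra.Polynomial" "HOL-Real_Asymp.Real_Asymp"
begin

text \<open>
  Since \<open>lam < lambda0 g\<close>, there is an \<open>s\<close> with \<open>e\<^bsup>lam\<^esup> s\<^sup>2 / 2 < G(s)\<close>; hence the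
  integrand \<open>Jpot g lam t = e\<^bsup>lam\<^esup> f(t)\<^sup>2 / 2 - G(f(t))\<close> of the lower order part of \<open>J\<close> is
  negative at \<open>a = f\<^sup>-\<^sup>1(s)\<close>. A radial profile \<open>u\<close> that equals \<open>\<plusminus>a\<close> on most of the unit ball
  therefore has \<open>\<integral> Jpot g lam (u x) dx < 0\<close>, and the rescaling \<open>u(x/T)\<close> multiplies this term
  by \<open>T\<^sup>N\<close> but the Dirichlet term only by \<open>T\<^bsup>N-2\<^esup>\<close>, so \<open>J(u(\<cdot>/T)) < 0\<close> for large \<open>T\<close>.

  The paths are \<open>\<xi> \<mapsto> a (2/\<pi>) arctan (L \<chi>(|x|\<^sup>2) P(\<xi>, |x|\<^sup>2))\<close> with a smooth cut-off \<open>\<chi>\<close>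
  and \<open>P\<close> odd in \<open>\<xi>\<close>: \<open>P(\<xi>, r) = \<xi>\<close> for \<open>\<Gamma>\<^sub>1\<close> and \<open>P(\<xi>, r) = \<Sum>\<^sub>j \<xi>\<^sub>j r\<^sup>j\<close> for \<open>\<Gamma>\<^sub>k\<close>, which
  for \<open>\<xi> \<noteq> 0\<close> vanishes only on finitely many spheres. As \<open>L \<rightarrow> \<infinity>\<close> the profile tends to
  \<open>a sgn P\<close>, and when \<open>g\<close> is odd, \<open>Jpot g lam\<close> is even, so the sign does not matter;
  compactness of the parameter set makes the choice of \<open>L\<close> and \<open>T\<close> uniform. Since \<open>grad_sq\<close>
  uses an arbitrarily chosen weak gradient, the fundamental lemma of the calculus of variations
  is needed to identify it with the classical gradient of these \<open>C\<^sup>1\<close> functions.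
\<close>

section \<open>The change of variables\<close>

definition fcv_inv :: "real \<Rightarrow> real" where
  "fcv_inv s = s * sqrt (1 + 2 * s\<^sup>2) / 2 + arsinh (sqrt 2 * s) / (2 * sqrt 2)"

lemma DERIV_fcv_inv: "(fcv_inv has_real_derivative sqrt (1 + 2 * s\<^sup>2)) (at s)"
proof -
  have pos: "0 < 1 + 2 * s\<^sup>2" by (simp add: add_pos_nonneg)
  have asinh: "((\<lambda>s. arsinh (sqrt 2 * s)) has_real_derivative (1 / sqrt ((sqrt 2 * s)\<^sup>2 + 1)) * sqrt 2) (at s)"
    by (rule DERIV_chain2[OF arsinh_real_has_field_derivative]) (auto intro!: derivative_eq_intros)
  have sq: "((\<lambda>s. 1 + 2 * s\<^sup>2) has_real_derivative 4 * s) (at s)"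
    by (auto intro!: derivative_eq_intros)
  have root: "((\<lambda>s. sqrt (1 + 2 * s\<^sup>2)) has_real_derivative inverse (sqrt (1 + 2 * s\<^sup>2)) / 2 * (4 * s)) (at s)"
    by (rule DERIV_chain2[OF DERIV_real_sqrt[OF pos] sq])
  have "(fcv_inv has_real_derivative
     (1 * sqrt (1 + 2 * s\<^sup>2) + (inverse (sqrt (1 + 2 * s\<^sup>2)) / 2 * (4 * s)) * s) / 2 +
     (1 / sqrt ((sqrt 2 * s)\<^sup>2 + 1)) * sqrt 2 / (2 * sqrt 2)) (at s)"
    unfolding fcv_inv_def[abs_def] by (intro DERIV_add DERIV_cdivide DERIV_mult DERIV_ident asinh root)
  moreover have "(1 * sqrt (1 + 2 * s\<^sup>2) + (inverse (sqrt (1 + 2 * s\<^sup>2)) / 2 * (4 * s)) * s) / 2 +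
     (1 / sqrt ((sqrt 2 * s)\<^sup>2 + 1)) * sqrt 2 / (2 * sqrt 2) = sqrt (1 + 2 * s\<^sup>2)"
  proof -
    have "(sqrt 2 * s)\<^sup>2 + 1 = 1 + 2 * s\<^sup>2" by (simp add: power_mult_distrib)
    moreover have "sqrt (1 + 2 * s\<^sup>2) * sqrt (1 + 2 * s\<^sup>2) = 1 + 2 * s\<^sup>2" "sqrt (1 + 2 * s\<^sup>2) \<noteq> 0"
      using pos by simp_all
    ultimately show ?thesis by (simp add: field_simps power2_eq_square)
  qed
  ultimately show ?thesis by simp
qed

lemma fcv_inv_0 [simp]: "fcv_inv 0 = 0"
  by (simp add: fcv_inv_def)

lemma fcv_inv_minus: "fcv_inv (- s) = - fcv_inv s"
  by (simp add: fcv_inv_def)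

lemma strict_mono_fcv_inv: "strict_mono fcv_inv"
proof (rule strict_monoI)
  fix x y :: real
  assume "x < y"
  then show "fcv_inv x < fcv_inv y"
    by (rule DERIV_pos_imp_increasing) (use DERIV_fcv_inv in \<open>auto intro!: exI simp: add_pos_nonneg\<close>)
qed

lemma fcv_inv_ge: "0 \<le> s \<Longrightarrow> s \<le> fcv_inv s"
  using DERIV_nonneg_imp_nondecreasing[of 0 s "\<lambda>s. fcv_inv s - s"]
  by (force intro!: exI derivative_eq_intros DERIV_fcv_inv)

lemma continuous_on_fcv_inv: "continuous_on S fcv_inv"
  by (meson DERIV_continuous DERIV_fcv_inv continuous_at_imp_continuous_on)

lemma surj_fcv_inv: "surj fcv_inv"
proof -
  have nonneg: "t \<in> range fcv_inv" if "0 \<le> t" for t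
    using IVT'[of fcv_inv 0 t s for s] that fcv_inv_ge[OF that] continuous_on_fcv_inv by fastforce
  have "t \<in> range fcv_inv" for t
  proof (cases "0 \<le> t")
    case False
    then obtain s where "- t = fcv_inv s" using nonneg[of "- t"] by auto
    then have "t = fcv_inv (- s)" by (simp add: fcv_inv_minus)
    then show ?thesis by blast
  qed (use nonneg in blast)
  then show ?thesis by blast
qed

lemma inj_fcv_inv: "inj fcv_inv"
  by (rule strict_mono_imp_inj_on[OF strict_mono_fcv_inv])

lemma fcv_inv_inv [simp]: "fcv_inv (inv fcv_inv t) = t"
  by (rule surj_f_inv_f[OF surj_fcv_inv])

lemma isCont_inv_fcv_inv: "isCont (inv fcv_inv) t"
proof -
  have "isCont (inv fcv_inv) (fcv_inv (inv fcv_inv t))"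
    by (rule isCont_inverse_function[where d=1 and f=fcv_inv])
       (auto simp: inv_f_f[OF inj_fcv_inv] intro: DERIV_isCont[OF DERIV_fcv_inv])
  then show ?thesis by simp
qed

lemma DERIV_inv_fcv_inv: "(inv fcv_inv has_real_derivative 1 / sqrt (1 + 2 * (inv fcv_inv t)\<^sup>2)) (at t)"
proof -
  have pos: "0 < 1 + 2 * (inv fcv_inv t)\<^sup>2" by (simp add: add_pos_nonneg)
  have "(inv fcv_inv has_real_derivative inverse (sqrt (1 + 2 * (inv fcv_inv t)\<^sup>2))) (at t)"
    by (rule DERIV_inverse_function[where a="t - 1" and b="t + 1", OF DERIV_fcv_inv])
       (use pos in \<open>auto simp: isCont_inv_fcv_inv\<close>)
  then show ?thesis by (simp add: divide_inverse)
qed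

lemma fcv_inv_ode_solution:
  assumes "h 0 = 0" and ode: "\<And>t. (h has_real_derivative 1 / sqrt (1 + 2 * (h t)\<^sup>2)) (at t)"
  shows "fcv_inv (h t) = t"
proof -
  have "\<forall>t. ((\<lambda>t. fcv_inv (h t) - t) has_real_derivative 0) (at t)"
  proof
    fix t
    have "((\<lambda>t. fcv_inv (h t) - t) has_real_derivative
           sqrt (1 + 2 * (h t)\<^sup>2) * (1 / sqrt (1 + 2 * (h t)\<^sup>2)) - 1) (at t)"
      by (rule derivative_eq_intros DERIV_chain2[OF DERIV_fcv_inv] ode refl)+
    moreover have "0 < 1 + 2 * (h t)\<^sup>2" by (simp add: add_pos_nonneg)
    ultimately show "((\<lambda>t. fcv_inv (h t) - t) has_real_derivative 0) (at t)" by simp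
  qed
  then have "(\<lambda>t. fcv_inv (h t) - t) t = (\<lambda>t. fcv_inv (h t) - t) 0"
    by (rule DERIV_isconst_all)
  then show ?thesis using assms(1) by simp
qed

lemma fcv_eq_inv: "fcv = inv fcv_inv"
  unfolding fcv_def
proof (rule the_equality)
  show "inv fcv_inv 0 = 0 \<and> (\<forall>t. (inv fcv_inv has_real_derivative 1 / sqrt (1 + 2 * (inv fcv_inv t)\<^sup>2)) (at t))"
    using DERIV_inv_fcv_inv inv_f_eq[OF inj_fcv_inv fcv_inv_0] by blast
  fix h
  assume "h 0 = 0 \<and> (\<forall>t. (h has_real_derivative 1 / sqrt (1 + 2 * (h t)\<^sup>2)) (at t))"
  then have "fcv_inv (h t) = t" for t by (intro fcv_inv_ode_solution) auto
  then show "h = inv fcv_inv" using inv_f_eq[OF inj_fcv_inv] by (intro ext) (metis)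
qed

lemma fcv_fcv_inv [simp]: "fcv (fcv_inv s) = s"
  by (simp add: fcv_eq_inv inv_f_f[OF inj_fcv_inv])

lemma fcv_0 [simp]: "fcv 0 = 0"
  using fcv_fcv_inv[of 0] by simp

lemma fcv_minus: "fcv (- t) = - fcv t"
proof -
  obtain s where "t = fcv_inv s" using surj_fcv_inv by blast
  then show ?thesis by (simp flip: fcv_inv_minus)
qed

lemma continuous_on_fcv: "continuous_on S fcv"
  unfolding fcv_eq_inv by (simp add: isCont_inv_fcv_inv continuous_at_imp_continuous_on)

section \<open>Test functions\<close>

definition flat_exp :: "nat \<Rightarrow> real \<Rightarrow> real" where
  "flat_exp m z = (if z > 0 then exp (-1/z) / z^m else 0)"

lemma flat_exp_0 [simp]: "flat_exp m 0 = 0"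
  by (simp add: flat_exp_def)

lemma flat_exp_0_bounds: "0 \<le> flat_exp 0 z" "flat_exp 0 z \<le> 1"
  by (auto simp: flat_exp_def)

lemma flat_exp_tendsto_0: "(flat_exp m \<longlongrightarrow> 0) (at 0)"
proof -
  have "((\<lambda>z::real. exp (-1/z) / z^m) \<longlongrightarrow> 0) (at_right 0)" by real_asymp
  moreover have "eventually (\<lambda>z. exp (-1/z) / z^m = flat_exp m z) (at_right (0::real))"
    by (simp add: flat_exp_def eventually_mono[OF eventually_at_right_less])
  ultimately have right: "(flat_exp m \<longlongrightarrow> 0) (at_right 0)"
    by (rule Lim_transform_eventually)
  have "eventually (\<lambda>z. 0 = flat_exp m z) (at_left (0::real))"
    using eventually_at_left_real[of "-1" 0] by (auto elim!: eventually_mono simp: flat_exp_def)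
  then have left: "(flat_exp m \<longlongrightarrow> 0) (at_left 0)"
    by (rule Lim_transform_eventually[OF tendsto_const])
  show ?thesis using left right by (simp add: filterlim_split_at)
qed

lemma DERIV_flat_exp:
  "(flat_exp m has_real_derivative (flat_exp (m+2) z - real m * flat_exp (m+1) z)) (at z)"
proof (cases z "0::real" rule: linorder_cases)
  case equal
  have "eventually (\<lambda>y. flat_exp (m+1) y = (flat_exp m y - flat_exp m 0) / (y - 0)) (at (0::real))"
    by (auto simp: eventually_at_filter flat_exp_def)
  then have "((\<lambda>y. (flat_exp m y - flat_exp m 0) / (y - 0)) \<longlongrightarrow> 0) (at 0)"
    by (rule Lim_transform_eventually[OF flat_exp_tendsto_0])
  then show ?thesis using equal by (simp add: has_field_derivative_iff)
next
  case greater
  have "((\<lambda>z. exp (-1/z) / z^m) has_real_derivative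
      (exp (-1/z) * (1/z^2) * z^m - exp (-1/z) * (real m * z^(m-1))) / (z^m * z^m)) (at z)"
    using greater by (auto intro!: derivative_eq_intros simp: power2_eq_square)
  moreover have "(exp (-1/z) * (1/z^2) * z^m - exp (-1/z) * (real m * z^(m-1))) / (z^m * z^m)
      = flat_exp (m+2) z - real m * flat_exp (m+1) z"
  proof (cases m)
    case 0
    then show ?thesis using greater by (simp add: flat_exp_def power2_eq_square)
  next
    case (Suc k)
    then show ?thesis using greater by (simp add: flat_exp_def field_simps power2_eq_square)
  qed
  ultimately have "((\<lambda>z. exp (-1/z) / z^m) has_real_derivative
      flat_exp (m+2) z - real m * flat_exp (m+1) z) (at z)" by simp
  then show ?thesis
    by (rule has_field_derivative_transform_within_open[where S="{0<..}"])
       (use greater in \<open>auto simp: flat_exp_def\<close>)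
next
  case less
  have "((\<lambda>z. 0::real) has_real_derivative flat_exp (m+2) z - real m * flat_exp (m+1) z) (at z)"
    using less by (simp add: flat_exp_def)
  then show ?thesis
    by (rule has_field_derivative_transform_within_open[where S="{..<0}"])
       (use less in \<open>auto simp: flat_exp_def\<close>)
qed

lemma isCont_flat_exp: "isCont (flat_exp m) z"
  by (rule DERIV_isCont[OF DERIV_flat_exp])

lemma continuous_on_flat_exp_comp: "continuous_on S f \<Longrightarrow> continuous_on S (\<lambda>z. flat_exp m (f z))"
  by (rule continuous_on_compose2[of UNIV "flat_exp m"]) (auto intro: continuous_at_imp_continuous_on isCont_flat_exp)

text \<open>The class is closed under differentiation, so products of its members over the coordinates
  are smooth in the sense of \<open>smooth_fun\<close>.\<close>

inductive_set flat_class :: "real poly \<Rightarrow> (real \<Rightarrow> real) set" for q where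
  base: "(\<lambda>y. poly r y * flat_exp m (poly q y)) \<in> flat_class q"
| add: "f \<in> flat_class q \<Longrightarrow> h \<in> flat_class q \<Longrightarrow> (\<lambda>y. f y + h y) \<in> flat_class q"

lemma flat_class_continuous_deriv:
  assumes "f \<in> flat_class q"
  shows "continuous_on UNIV f \<and> (\<exists>f'\<in>flat_class q. \<forall>y. (f has_real_derivative f' y) (at y))"
  using assms
proof induction
  case (base r m)
  let ?f' = "\<lambda>y. (poly (pderiv r) y * flat_exp m (poly q y) + poly (r * pderiv q) y * flat_exp (m+2) (poly q y))
           + poly (smult (- real m) (r * pderiv q)) y * flat_exp (m+1) (poly q y)"
  have "continuous_on UNIV (\<lambda>y. poly r y * flat_exp m (poly q y))"
    by (intro continuous_intros continuous_on_flat_exp_comp)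
  moreover have "?f' \<in> flat_class q" by (intro flat_class.add flat_class.base)
  moreover have "((\<lambda>y. poly r y * flat_exp m (poly q y)) has_real_derivative ?f' y) (at y)" for y
  proof -
    have "((\<lambda>y. poly r y * flat_exp m (poly q y)) has_real_derivative
         poly (pderiv r) y * flat_exp m (poly q y) +
         ((flat_exp (m+2) (poly q y) - real m * flat_exp (m+1) (poly q y)) * poly (pderiv q) y) * poly r y) (at y)"
      by (intro DERIV_mult poly_DERIV DERIV_chain2[OF DERIV_flat_exp])
    then show ?thesis by (simp add: algebra_simps)
  qed
  ultimately show ?case by (intro conjI bexI[of _ ?f']) auto
next
  case (add f h)
  then obtain f' h' where "f' \<in> flat_class q" "\<And>y. (f has_real_derivative f' y) (at y)"
     and "h' \<in> flat_class q" "\<And>y. (h has_real_derivative h' y) (at y)" by blast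
  moreover have "continuous_on UNIV (\<lambda>y. f y + h y)" using add by (intro continuous_intros) auto
  ultimately show ?case by (intro conjI bexI[of _ "\<lambda>y. f' y + h' y"] allI DERIV_add flat_class.add) auto
qed

definition flat_tensor :: "('a::euclidean_space \<Rightarrow> real poly) \<Rightarrow> ('a \<Rightarrow> real) set" where
  "flat_tensor Q = {\<phi>. \<exists>F. (\<forall>b\<in>Basis. F b \<in> flat_class (Q b)) \<and> \<phi> = (\<lambda>x. \<Prod>b\<in>Basis. F b (x \<bullet> b))}"

lemma flat_tensor_partial_deriv:
  assumes "\<phi> \<in> flat_tensor Q" and i: "i \<in> Basis"
  shows "\<exists>dphi\<in>flat_tensor Q. \<forall>x. ((\<lambda>t. \<phi> (x + t *\<^sub>R i)) has_real_derivative dphi x) (at 0)"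
proof -
  obtain F where F: "\<And>b. b \<in> Basis \<Longrightarrow> F b \<in> flat_class (Q b)" and phi: "\<phi> = (\<lambda>x. \<Prod>b\<in>Basis. F b (x \<bullet> b))"
    using assms unfolding flat_tensor_def by blast
  obtain Fi' where Fi': "Fi' \<in> flat_class (Q i)" "\<And>y. (F i has_real_derivative Fi' y) (at y)"
    using flat_class_continuous_deriv[OF F[OF i]] by blast
  define G where "G = F(i := Fi')"
  define dphi where "dphi = (\<lambda>x. \<Prod>b\<in>Basis. G b (x \<bullet> b))"
  have "\<forall>b\<in>Basis. G b \<in> flat_class (Q b)" using F Fi' by (auto simp: G_def)
  then have "dphi \<in> flat_tensor Q" unfolding flat_tensor_def dphi_def by blast
  moreover have "((\<lambda>t. \<phi> (x + t *\<^sub>R i)) has_real_derivative dphi x) (at 0)" for x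
  proof -
    let ?C = "\<Prod>b\<in>Basis - {i}. F b (x \<bullet> b)"
    have shift: "\<phi> (x + t *\<^sub>R i) = F i (x \<bullet> i + t) * ?C" for t
    proof -
      have "\<phi> (x + t *\<^sub>R i) = F i ((x + t *\<^sub>R i) \<bullet> i) * (\<Prod>b\<in>Basis - {i}. F b ((x + t *\<^sub>R i) \<bullet> b))"
        unfolding phi by (rule prod.remove[OF finite_Basis i])
      also have "(\<Prod>b\<in>Basis - {i}. F b ((x + t *\<^sub>R i) \<bullet> b)) = ?C"
        by (rule prod.cong) (auto simp: inner_add_left inner_Basis i)
      finally show ?thesis using i by (simp add: inner_add_left)
    qed
    have at_x: "dphi x = Fi' (x \<bullet> i) * ?C"
    proof -
      have "dphi x = G i (x \<bullet> i) * (\<Prod>b\<in>Basis - {i}. G b (x \<bullet> b))"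
        unfolding dphi_def by (rule prod.remove[OF finite_Basis i])
      also have "(\<Prod>b\<in>Basis - {i}. G b (x \<bullet> b)) = ?C"
        by (rule prod.cong) (auto simp: G_def)
      finally show ?thesis by (simp add: G_def)
    qed
    have "((\<lambda>t. F i (x \<bullet> i + t) * ?C) has_real_derivative (Fi' (x \<bullet> i + 0) * 1) * ?C) (at 0)"
      by (intro DERIV_cmult_right DERIV_chain2[OF Fi'(2)] derivative_eq_intros) auto
    then show ?thesis unfolding shift at_x by simp
  qed
  ultimately show ?thesis by blast
qed

lemma continuous_on_flat_tensor:
  assumes "\<phi> \<in> flat_tensor Q"
  shows "continuous_on UNIV \<phi>"
proof -
  obtain F where F: "\<And>b. b \<in> Basis \<Longrightarrow> F b \<in> flat_class (Q b)" and phi: "\<phi> = (\<lambda>x. \<Prod>b\<in>Basis. F b (x \<bullet> b))"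
    using assms unfolding flat_tensor_def by blast
  have cont: "continuous_on UNIV (F b)" if "b \<in> Basis" for b
    using flat_class_continuous_deriv[OF F[OF that]] by blast
  show ?thesis unfolding phi
    by (intro continuous_on_prod continuous_on_compose2[OF cont] continuous_intros) auto
qed

lemma smooth_fun_flat_tensor: "\<phi> \<in> flat_tensor Q \<Longrightarrow> smooth_fun \<phi>"
  unfolding smooth_fun_def
  by (intro exI[of _ "flat_tensor Q"] conjI ballI continuous_on_flat_tensor flat_tensor_partial_deriv)

definition bump_poly :: "'a::euclidean_space \<Rightarrow> 'a \<Rightarrow> nat \<Rightarrow> 'a \<Rightarrow> real poly" where
  "bump_poly \<alpha> \<beta> n b = smult (real n + 1) ([:-(\<alpha> \<bullet> b), 1:] * [:\<beta> \<bullet> b, -1:])"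

lemma poly_bump_poly: "poly (bump_poly \<alpha> \<beta> n b) y = (real n + 1) * ((y - \<alpha> \<bullet> b) * (\<beta> \<bullet> b - y))"
  by (simp add: bump_poly_def algebra_simps)

definition bump :: "'a::euclidean_space \<Rightarrow> 'a \<Rightarrow> nat \<Rightarrow> 'a \<Rightarrow> real" where
  "bump \<alpha> \<beta> n x = (\<Prod>b\<in>Basis. flat_exp 0 (poly (bump_poly \<alpha> \<beta> n b) (x \<bullet> b)))"

lemma bump_in_flat_tensor: "bump \<alpha> \<beta> n \<in> flat_tensor (bump_poly \<alpha> \<beta> n)"
proof -
  have "(\<lambda>y. poly 1 y * flat_exp 0 (poly (bump_poly \<alpha> \<beta> n b) y)) \<in> flat_class (bump_poly \<alpha> \<beta> n b)" for b
    by (rule flat_class.base)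
  then have "(\<lambda>y. flat_exp 0 (poly (bump_poly \<alpha> \<beta> n b) y)) \<in> flat_class (bump_poly \<alpha> \<beta> n b)" for b
    by simp
  then show ?thesis unfolding flat_tensor_def bump_def[abs_def]
    by (intro CollectI exI[of _ "\<lambda>b y. flat_exp 0 (poly (bump_poly \<alpha> \<beta> n b) y)"]) auto
qed

lemma bump_bounds: "0 \<le> bump \<alpha> \<beta> n x" "bump \<alpha> \<beta> n x \<le> 1"
  unfolding bump_def by (auto intro!: prod_nonneg prod_le_1 flat_exp_0_bounds)

context
  fixes \<alpha> \<beta> :: "'a::euclidean_space"
  assumes box_nonempty: "\<forall>b\<in>Basis. \<alpha> \<bullet> b < \<beta> \<bullet> b"
begin

lemma bump_eq_0:
  assumes "x \<notin> box \<alpha> \<beta>"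
  shows "bump \<alpha> \<beta> n x = 0"
proof -
  obtain b where b: "b \<in> Basis" "\<not> (\<alpha> \<bullet> b < x \<bullet> b \<and> x \<bullet> b < \<beta> \<bullet> b)"
    using assms by (auto simp: mem_box)
  then have "\<not> 0 < (x \<bullet> b - \<alpha> \<bullet> b) * (\<beta> \<bullet> b - x \<bullet> b)"
    using box_nonempty by (auto simp: zero_less_mult_iff)
  then have "flat_exp 0 (poly (bump_poly \<alpha> \<beta> n b) (x \<bullet> b)) = 0"
    by (simp add: flat_exp_def poly_bump_poly zero_less_mult_iff)
  then show ?thesis unfolding bump_def using b(1) by (intro prod_zero) auto
qed

lemma abs_bump_le_indicator: "\<bar>bump \<alpha> \<beta> n x\<bar> \<le> indicator (box \<alpha> \<beta>) x"
  using bump_eq_0[of x n] bump_bounds[of \<alpha> \<beta> n x] by (auto split: split_indicator)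

lemma test_fun_bump: "test_fun (bump \<alpha> \<beta> n)"
proof -
  have "{x. bump \<alpha> \<beta> n x \<noteq> 0} \<subseteq> cbox \<alpha> \<beta>"
    using bump_eq_0 box_subset_cbox by blast
  then have "closure {x. bump \<alpha> \<beta> n x \<noteq> 0} \<subseteq> cbox \<alpha> \<beta>"
    using closure_minimal closed_cbox by blast
  then have "compact (closure {x. bump \<alpha> \<beta> n x \<noteq> 0})"
    by (meson bounded_cbox bounded_subset closed_closure compact_eq_bounded_closed)
  then show ?thesis unfolding test_fun_def using smooth_fun_flat_tensor[OF bump_in_flat_tensor] by blast
qed

lemma bump_tendsto_indicator: "(\<lambda>n. bump \<alpha> \<beta> n x) \<longlonglongrightarrow> indicator (box \<alpha> \<beta>) x"
proof (cases "x \<in> box \<alpha> \<beta>")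
  case True
  have factor: "(\<lambda>n. flat_exp 0 (poly (bump_poly \<alpha> \<beta> n b) (x \<bullet> b))) \<longlonglongrightarrow> 1" if b: "b \<in> Basis" for b
  proof -
    define u where "u = (x \<bullet> b - \<alpha> \<bullet> b) * (\<beta> \<bullet> b - x \<bullet> b)"
    have u: "u > 0" using True b by (auto simp: mem_box u_def)
    have "flat_exp 0 (poly (bump_poly \<alpha> \<beta> n b) (x \<bullet> b)) = exp ((-1/u) * inverse (real (Suc n)))" for n
    proof -
      have "poly (bump_poly \<alpha> \<beta> n b) (x \<bullet> b) = real (Suc n) * u" by (simp add: poly_bump_poly u_def)
      moreover have "(-1/u) * inverse (real (Suc n)) = -1 / (real (Suc n) * u)" using u by (simp add: field_simps)
      ultimately show ?thesis using u by (simp add: flat_exp_def)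
    qed
    moreover have "(\<lambda>n. exp ((-1/u) * inverse (real (Suc n)))) \<longlonglongrightarrow> exp ((-1/u) * 0)"
      by (intro tendsto_intros LIMSEQ_inverse_real_of_nat)
    ultimately show ?thesis by simp
  qed
  have "(\<lambda>n. bump \<alpha> \<beta> n x) \<longlonglongrightarrow> (\<Prod>b\<in>Basis. (\<lambda>_. 1::real) (x \<bullet> b))"
    unfolding bump_def by (rule tendsto_prod) (simp add: factor)
  then show ?thesis using True by simp
qed (simp add: bump_eq_0)

end

section \<open>The fundamental lemma of the calculus of variations\<close>

lemma abs_le_one_plus_square: "\<bar>t::real\<bar> \<le> 1 + t\<^sup>2"
proof -
  have "0 \<le> (\<bar>t\<bar> - 1)\<^sup>2" by simp
  then show ?thesis by (simp add: power2_diff)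
qed

lemma integrable_one_plus_square_indicator:
  fixes h :: "'a::euclidean_space \<Rightarrow> real"
  assumes h2: "integrable lborel (\<lambda>x. (h x)\<^sup>2)" and S: "S \<in> sets borel" "bounded S"
  shows "integrable lborel (\<lambda>x. (1 + (h x)\<^sup>2) * indicator S x)"
proof -
  have "integrable lborel (indicator S :: 'a \<Rightarrow> real)"
    using S emeasure_bounded_finite[OF S(2)] by (simp add: integrable_indicator_iff)
  moreover have "integrable lborel (\<lambda>x. indicator S x *\<^sub>R (h x)\<^sup>2)"
    using S by (intro integrable_mult_indicator h2) auto
  ultimately have "integrable lborel (\<lambda>x. indicator S x + indicator S x *\<^sub>R (h x)\<^sup>2)"
    by (rule Bochner_Integration.integrable_add)
  then show ?thesis by (simp add: algebra_simps)
qed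

lemma integrable_mult_indicator_bounded:
  fixes h :: "'a::euclidean_space \<Rightarrow> real"
  assumes hm: "h \<in> borel_measurable lborel" and h2: "integrable lborel (\<lambda>x. (h x)\<^sup>2)"
    and S: "S \<in> sets borel" "bounded S"
  shows "integrable lborel (\<lambda>x. h x * indicator S x)"
  by (rule Bochner_Integration.integrable_bound[OF integrable_one_plus_square_indicator[OF h2 S]])
     (use hm S in \<open>auto intro!: AE_I2 abs_le_one_plus_square simp: abs_mult split: split_indicator\<close>)

lemma box_integral_eq_0_if_test_integrals_eq_0:
  fixes h :: "'a::euclidean_space \<Rightarrow> real"
  assumes hm: "h \<in> borel_measurable lborel" and h2: "integrable lborel (\<lambda>x. (h x)\<^sup>2)"
    and test: "\<And>\<phi>. test_fun \<phi> \<Longrightarrow> (\<integral>x. h x * \<phi> x \<partial>lborel) = 0"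
  shows "(\<integral>x. h x * indicator (box \<alpha> \<beta>) x \<partial>lborel) = 0"
proof (cases "\<forall>b\<in>Basis. \<alpha> \<bullet> b < \<beta> \<bullet> b")
  case False
  then have "box \<alpha> \<beta> = {}" using box_ne_empty(2) by blast
  then show ?thesis by simp
next
  case True
  have bump_measurable: "bump \<alpha> \<beta> n \<in> borel_measurable lborel" for n
    using continuous_on_flat_tensor[OF bump_in_flat_tensor] by (auto intro: borel_measurable_continuous_onI)
  have "(\<lambda>n. \<integral>x. h x * bump \<alpha> \<beta> n x \<partial>lborel) \<longlonglongrightarrow> (\<integral>x. h x * indicator (box \<alpha> \<beta>) x \<partial>lborel)"
  proof (rule integral_dominated_convergence[where w="\<lambda>x. (1 + (h x)\<^sup>2) * indicator (box \<alpha> \<beta>) x"])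
    show "(\<lambda>x. h x * indicator (box \<alpha> \<beta>) x) \<in> borel_measurable lborel" using hm by measurable
    show "(\<lambda>x. h x * bump \<alpha> \<beta> n x) \<in> borel_measurable lborel" for n using hm bump_measurable[of n] by measurable
    show "integrable lborel (\<lambda>x. (1 + (h x)\<^sup>2) * indicator (box \<alpha> \<beta>) x)"
      by (rule integrable_one_plus_square_indicator[OF h2]) auto
    show "AE x in lborel. (\<lambda>n. h x * bump \<alpha> \<beta> n x) \<longlonglongrightarrow> h x * indicator (box \<alpha> \<beta>) x"
      by (intro AE_I2 tendsto_mult tendsto_const bump_tendsto_indicator True)
    show "AE x in lborel. norm (h x * bump \<alpha> \<beta> n x) \<le> (1 + (h x)\<^sup>2) * indicator (box \<alpha> \<beta>) x" for n
      by (intro AE_I2) (auto simp: abs_mult intro!: mult_mono abs_le_one_plus_square abs_bump_le_indicator True)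
  qed
  moreover have "(\<integral>x. h x * bump \<alpha> \<beta> n x \<partial>lborel) = 0" for n
    by (rule test[OF test_fun_bump[OF True]])
  ultimately have "(\<lambda>n. 0) \<longlonglongrightarrow> (\<integral>x. h x * indicator (box \<alpha> \<beta>) x \<partial>lborel)" by simp
  then show ?thesis using LIMSEQ_unique[OF _ tendsto_const] by blast
qed

lemma emeasure_density_box:
  fixes f :: "'a::euclidean_space \<Rightarrow> real"
  assumes f: "f \<in> borel_measurable lborel" "\<And>x. 0 \<le> f x"
    and int: "integrable lborel (\<lambda>x. f x * indicator (box a b) x)"
  shows "emeasure (density lborel (\<lambda>x. ennreal (f x))) (box a b) = ennreal (\<integral>x. f x * indicator (box a b) x \<partial>lborel)"
proof -
  have "emeasure (density lborel (\<lambda>x. ennreal (f x))) (box a b) = (\<integral>\<^sup>+x. ennreal (f x) * indicator (box a b) x \<partial>lborel)"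
    using f by (intro emeasure_density) auto
  also have "\<dots> = (\<integral>\<^sup>+x. ennreal (f x * indicator (box a b) x) \<partial>lborel)"
    by (intro nn_integral_cong) (auto split: split_indicator)
  also have "\<dots> = ennreal (\<integral>x. f x * indicator (box a b) x \<partial>lborel)"
    using f by (intro nn_integral_eq_integral[OF int]) auto
  finally show ?thesis .
qed

lemma density_lborel_eqI_boxes:
  fixes P N :: "'a::euclidean_space \<Rightarrow> ennreal"
  assumes eq: "\<And>a b. emeasure (density lborel P) (box a b) = emeasure (density lborel N) (box a b)"
    and finite: "\<And>a b. emeasure (density lborel P) (box a b) \<noteq> \<infinity>"
  shows "density lborel P = density lborel N"
proof (rule measure_eqI_generator_eq[where E="range (\<lambda>(a, b). box a b)" and \<Omega>=UNIV
      and A="\<lambda>n::nat. box (- (real n *\<^sub>R One)) (real n *\<^sub>R One)"])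
  show "Int_stable (range (\<lambda>(a, b). box a b :: 'a set))"
    by (auto simp: Int_stable_def box_Int_box)
  show "sets (density lborel P) = sigma_sets UNIV (range (\<lambda>(a, b). box a b))"
    "sets (density lborel N) = sigma_sets UNIV (range (\<lambda>(a, b). box a b))"
    by (simp_all add: borel_eq_box)
  show "(\<Union>n::nat. box (- (real n *\<^sub>R One)) (real n *\<^sub>R One)) = (UNIV :: 'a set)"
    unfolding UN_box_eq_UNIV by auto
qed (use eq finite in auto)

text \<open>The positive and negative parts of \<open>h\<close> are densities that agree on all boxes, hence
  coincide as measures.\<close>

lemma AE_eq_0_if_box_integrals_eq_0:
  fixes h :: "'a::euclidean_space \<Rightarrow> real"
  assumes hm: "h \<in> borel_measurable lborel"
    and loc: "\<And>a b. integrable lborel (\<lambda>x. h x * indicator (box a b) x)"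
    and box: "\<And>a b. (\<integral>x. h x * indicator (box a b) x \<partial>lborel) = 0"
  shows "AE x in lborel. h x = 0"
proof -
  have pos: "integrable lborel (\<lambda>x. max 0 (h x) * indicator (box a b) x)" for a b
    by (rule Bochner_Integration.integrable_bound[OF loc[of a b]]) (use hm in \<open>auto split: split_indicator\<close>)
  have neg: "integrable lborel (\<lambda>x. max 0 (- h x) * indicator (box a b) x)" for a b
    by (rule Bochner_Integration.integrable_bound[OF loc[of a b]]) (use hm in \<open>auto split: split_indicator\<close>)
  have "(\<integral>x. max 0 (h x) * indicator (box a b) x \<partial>lborel) - (\<integral>x. max 0 (- h x) * indicator (box a b) x \<partial>lborel)
      = (\<integral>x. h x * indicator (box a b) x \<partial>lborel)" for a b
  proof -
    have "(\<integral>x. max 0 (h x) * indicator (box a b) x \<partial>lborel) - (\<integral>x. max 0 (- h x) * indicator (box a b) x \<partial>lborel)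
        = (\<integral>x. max 0 (h x) * indicator (box a b) x - max 0 (- h x) * indicator (box a b) x \<partial>lborel)"
      by (rule Bochner_Integration.integral_diff[OF pos neg, symmetric])
    also have "\<dots> = (\<integral>x. h x * indicator (box a b) x \<partial>lborel)"
      by (intro Bochner_Integration.integral_cong) (auto simp: max_def split: split_indicator)
    finally show ?thesis .
  qed
  then have "(\<integral>x. max 0 (h x) * indicator (box a b) x \<partial>lborel) = (\<integral>x. max 0 (- h x) * indicator (box a b) x \<partial>lborel)"
    for a b using box[of a b] by (metis eq_iff_diff_eq_0)
  then have "density lborel (\<lambda>x. ennreal (max 0 (h x))) = density lborel (\<lambda>x. ennreal (max 0 (- h x)))"
    using hm by (intro density_lborel_eqI_boxes) (simp_all add: emeasure_density_box pos neg)
  then have "AE x in lborel. ennreal (max 0 (h x)) = ennreal (max 0 (- h x))"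
    using hm by (intro sigma_finite_measure.density_unique[OF sigma_finite_lborel]) auto
  then show ?thesis
    by (rule AE_mp) (auto intro!: AE_I2 simp: max_def split: if_splits)
qed

lemma fundamental_lemma_calculus_of_variations:
  fixes h :: "'a::euclidean_space \<Rightarrow> real"
  assumes hm: "h \<in> borel_measurable lborel" and h2: "integrable lborel (\<lambda>x. (h x)\<^sup>2)"
    and test: "\<And>\<phi>. test_fun \<phi> \<Longrightarrow> (\<integral>x. h x * \<phi> x \<partial>lborel) = 0"
  shows "AE x in lborel. h x = 0"
  by (intro AE_eq_0_if_box_integrals_eq_0 hm integrable_mult_indicator_bounded[OF hm h2]
      box_integral_eq_0_if_test_integrals_eq_0[OF hm h2 test]) auto

section \<open>Weak gradients of compactly supported functions\<close>

lemma integrable_continuous_ball_support: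
  fixes f :: "'a::euclidean_space \<Rightarrow> real"
  assumes "continuous_on UNIV f" "\<And>x. R \<le> norm x \<Longrightarrow> f x = 0"
  shows "integrable lborel f"
proof -
  have "integrable lborel (\<lambda>x. indicator (cball 0 R) x *\<^sub>R f x)"
    by (rule borel_integrable_compact) (auto intro: continuous_on_subset[OF assms(1)])
  moreover have "(\<lambda>x. indicator (cball 0 R) x *\<^sub>R f x) = f"
    using assms(2) by (auto simp: fun_eq_iff split: split_indicator)
  ultimately show ?thesis by simp
qed

lemma bounded_continuous_ball_support:
  fixes f :: "'a::euclidean_space \<Rightarrow> real"
  assumes "continuous_on UNIV f" "\<And>x. R \<le> norm x \<Longrightarrow> f x = 0"
  obtains M where "\<And>x. \<bar>f x\<bar> \<le> M"
proof -
  have "compact (f ` cball 0 R)"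
    by (rule compact_continuous_image) (auto intro: continuous_on_subset[OF assms(1)])
  then obtain M where M: "\<forall>y\<in>f ` cball 0 R. norm y \<le> M"
    using compact_imp_bounded bounded_iff by metis
  have "\<bar>f x\<bar> \<le> max M 0" for x
  proof (cases "norm x \<le> R")
    case True
    then have "f x \<in> f ` cball 0 R" by simp
    then have "norm (f x) \<le> M" using M by blast
    then show ?thesis by simp
  qed (use assms(2) in simp)
  then show ?thesis using that by blast
qed

lemma integral_le_cball_bound:
  fixes F :: "'a::euclidean_space \<Rightarrow> real"
  assumes F: "integrable lborel F"
    and inside: "\<And>x. norm x \<le> r \<Longrightarrow> F x \<le> C" and outside: "\<And>x. r < norm x \<Longrightarrow> F x = 0"
  shows "(\<integral>x. F x \<partial>lborel) \<le> C * measure lborel (cball (0::'a) r)"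
proof -
  have "integrable lborel (indicator (cball 0 r) :: 'a \<Rightarrow> real)"
    using emeasure_bounded_finite[OF bounded_cball[of "0::'a" r]] by (simp add: integrable_indicator_iff)
  then have ind: "integrable lborel (\<lambda>x. C * indicator (cball (0::'a) r) x)" by simp
  have le: "F x \<le> C * indicator (cball (0::'a) r) x" for x
    using inside[of x] outside[of x] by (auto split: split_indicator simp: not_le)
  have "(\<integral>x. F x \<partial>lborel) \<le> (\<integral>x. C * indicator (cball (0::'a) r) x \<partial>lborel)"
    using F ind le by (rule Bochner_Integration.integral_mono)
  then show ?thesis by simp
qed

lemma lborel_integral_translate:
  fixes F :: "'a::euclidean_space \<Rightarrow> real"
  assumes "F \<in> borel_measurable borel"
  shows "(\<integral>x. F (c + x) \<partial>lborel) = (\<integral>x. F x \<partial>lborel)"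
proof -
  have "(\<integral>x. F x \<partial>lborel) = (\<integral>x. F x \<partial>distr lborel borel ((+) c))"
    by (simp add: lborel_distr_plus)
  also have "\<dots> = (\<integral>x. F (c + x) \<partial>lborel)"
    by (rule integral_distr) (use assms in auto)
  finally show ?thesis by simp
qed

lemma partial_difference_quotient_bound:
  fixes F D :: "'a::euclidean_space \<Rightarrow> real"
  assumes dF: "\<And>x. ((\<lambda>t. F (x + t *\<^sub>R i)) has_real_derivative D x) (at 0)"
    and M: "\<And>x. \<bar>D x\<bar> \<le> M" and i: "norm i \<le> 1" and supp: "\<And>x. R \<le> norm x \<Longrightarrow> F x = 0"
    and h: "0 < h" "h \<le> 1"
  shows "\<bar>(F (x + h *\<^sub>R i) - F x) / h\<bar> \<le> M * indicator (cball 0 (R + 1)) x"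
proof (cases "norm x \<le> R + 1")
  case True
  have "((\<lambda>t. F (x + t *\<^sub>R i)) has_real_derivative D (x + t *\<^sub>R i)) (at t)" for t
  proof -
    have "((\<lambda>s. F ((x + t *\<^sub>R i) + s *\<^sub>R i)) has_real_derivative D (x + t *\<^sub>R i)) (at 0)"
      by (rule dF)
    then have "((\<lambda>s. F (x + (s + t) *\<^sub>R i)) has_real_derivative D (x + t *\<^sub>R i)) (at 0)"
      by (simp add: algebra_simps scaleR_add_left)
    then show ?thesis using DERIV_shift[of "\<lambda>t. F (x + t *\<^sub>R i)" "D (x + t *\<^sub>R i)" 0 t] by simp
  qed
  then obtain z where "F (x + h *\<^sub>R i) - F (x + 0 *\<^sub>R i) = (h - 0) * D (x + z *\<^sub>R i)"
    using MVT2[OF h(1), of "\<lambda>t. F (x + t *\<^sub>R i)" "\<lambda>t. D (x + t *\<^sub>R i)"] by blast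
  then show ?thesis using M[of "x + z *\<^sub>R i"] h True by simp
next
  case False
  have "norm x \<le> norm (x + h *\<^sub>R i) + h * norm i"
    by (metis abs_of_pos add_diff_cancel_right' h(1) norm_scaleR norm_triangle_ineq4)
  moreover have "h * norm i \<le> 1" using h i by (simp add: mult_le_one)
  ultimately have "R \<le> norm (x + h *\<^sub>R i)" using False by linarith
  then show ?thesis using supp False by simp
qed

lemma integral_translate_diff_eq_0:
  fixes F :: "'a::euclidean_space \<Rightarrow> real"
  assumes cF: "continuous_on UNIV F" and supp: "\<And>x. R \<le> norm x \<Longrightarrow> F x = 0"
  shows "(\<integral>x. F (x + c) - F x \<partial>lborel) = 0"
proof -
  have translate_integrable: "integrable lborel (\<lambda>x. F (x + c))" for c
  proof (rule integrable_continuous_ball_support[where R="R + norm c"])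
    show "continuous_on UNIV (\<lambda>x. F (x + c))"
      by (intro continuous_on_compose2[OF cF] continuous_intros) auto
    show "F (x + c) = 0" if "R + norm c \<le> norm x" for x
    proof -
      have "norm x \<le> norm (x + c) + norm c" by (metis add_diff_cancel norm_triangle_ineq4)
      then show ?thesis using supp that by auto
    qed
  qed
  have "(\<integral>x. F (x + c) \<partial>lborel) = (\<integral>x. F x \<partial>lborel)"
    using lborel_integral_translate[of F c] cF by (simp add: add.commute borel_measurable_continuous_onI)
  then show ?thesis
    using translate_integrable[of c] translate_integrable[of 0] by simp
qed

text \<open>The difference quotients have integral zero by translation invariance and converge
  dominatedly to the partial derivative.\<close>

lemma integral_partial_deriv_eq_0:
  fixes F D :: "'a::euclidean_space \<Rightarrow> real" and i :: 'a
  assumes cF: "continuous_on UNIV F" and cD: "continuous_on UNIV D"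
    and dF: "\<And>x. ((\<lambda>t. F (x + t *\<^sub>R i)) has_real_derivative D x) (at 0)"
    and i: "norm i \<le> 1"
    and supp: "\<And>x. R \<le> norm x \<Longrightarrow> F x = 0 \<and> D x = 0"
  shows "(\<integral>x. D x \<partial>lborel) = 0"
proof -
  obtain M where M: "\<And>x. \<bar>D x\<bar> \<le> M"
    using bounded_continuous_ball_support[OF cD, of R] supp by metis
  define h where "h n = inverse (real (Suc n))" for n
  have h: "0 < h n" "h n \<le> 1" for n by (auto simp: h_def field_simps)
  have h_tendsto: "filterlim h (at 0) sequentially"
    unfolding filterlim_at h_def using LIMSEQ_inverse_real_of_nat by auto
  define Q where "Q n x = (F (x + h n *\<^sub>R i) - F x) / h n" for n x
  have "(\<integral>x. Q n x \<partial>lborel) = 0" for n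
    using integral_translate_diff_eq_0[OF cF, of R "h n *\<^sub>R i"] supp unfolding Q_def by simp
  moreover have "(\<lambda>n. \<integral>x. Q n x \<partial>lborel) \<longlonglongrightarrow> (\<integral>x. D x \<partial>lborel)"
  proof (rule integral_dominated_convergence[where w="\<lambda>x::'a. M * indicator (cball 0 (R + 1)) x"])
    show "D \<in> borel_measurable lborel" using cD by (simp add: borel_measurable_continuous_onI)
    have "F \<in> borel_measurable borel" using cF by (rule borel_measurable_continuous_onI)
    then show "Q n \<in> borel_measurable lborel" for n unfolding Q_def by measurable
    have "integrable lborel (indicator (cball 0 (R + 1)) :: 'a \<Rightarrow> real)"
      using emeasure_bounded_finite[OF bounded_cball[of "0::'a" "R+1"]] by (simp add: integrable_indicator_iff)
    then show "integrable lborel (\<lambda>x::'a. M * indicator (cball 0 (R + 1)) x)"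
      by simp
    show "AE x in lborel. (\<lambda>n. Q n x) \<longlonglongrightarrow> D x"
    proof (rule AE_I2)
      fix x
      have "((\<lambda>t. (F (x + t *\<^sub>R i) - F (x + 0 *\<^sub>R i)) / (t - 0)) \<longlongrightarrow> D x) (at 0)"
        using dF[of x] by (simp add: has_field_derivative_iff)
      from filterlim_compose[OF this h_tendsto] show "(\<lambda>n. Q n x) \<longlonglongrightarrow> D x"
        by (simp add: Q_def)
    qed
    show "AE x in lborel. norm (Q n x) \<le> M * indicator (cball (0::'a) (R + 1)) x" for n
      using partial_difference_quotient_bound[OF dF M i _ h] supp by (simp add: Q_def)
  qed
  ultimately have "(\<lambda>n. 0) \<longlonglongrightarrow> (\<integral>x. D x \<partial>lborel)" by simp
  then show ?thesis using LIMSEQ_unique[OF _ tendsto_const] by blast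
qed

lemma continuous_on_test_fun:
  assumes "test_fun \<phi>"
  shows "continuous_on UNIV \<phi>"
proof -
  obtain S where "\<phi> \<in> S" "\<forall>\<psi>\<in>S. continuous_on UNIV \<psi>"
    using assms unfolding test_fun_def smooth_fun_def by blast
  then show ?thesis by blast
qed

lemma test_fun_partial_deriv:
  assumes "test_fun \<phi>" "i \<in> Basis"
  obtains dphi where "\<forall>x. ((\<lambda>t. \<phi> (x + t *\<^sub>R i)) has_real_derivative dphi x) (at 0)"
proof -
  obtain S where "\<phi> \<in> S" "\<forall>\<psi>\<in>S. \<forall>i\<in>Basis. \<exists>dphi\<in>S. \<forall>x. ((\<lambda>t. \<psi> (x + t *\<^sub>R i)) has_real_derivative dphi x) (at 0)"
    using assms(1) unfolding test_fun_def smooth_fun_def by blast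
  then show ?thesis using assms(2) that by blast
qed

lemma continuous_on_test_fun_partial_deriv:
  assumes "test_fun \<phi>" "i \<in> Basis"
    and d: "\<forall>x. ((\<lambda>t. \<phi> (x + t *\<^sub>R i)) has_real_derivative dphi x) (at 0)"
  shows "continuous_on UNIV dphi"
proof -
  obtain S where S: "\<phi> \<in> S" "\<forall>\<psi>\<in>S. continuous_on UNIV \<psi> \<and>
      (\<forall>i\<in>Basis. \<exists>dphi\<in>S. \<forall>x. ((\<lambda>t. \<psi> (x + t *\<^sub>R i)) has_real_derivative dphi x) (at 0))"
    using assms(1) unfolding test_fun_def smooth_fun_def by blast
  then obtain d' where d': "d' \<in> S" "\<forall>x. ((\<lambda>t. \<phi> (x + t *\<^sub>R i)) has_real_derivative d' x) (at 0)"
    using assms(2) by blast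
  have "dphi = d'" using d d'(2) DERIV_unique by blast
  then show ?thesis using S d'(1) by simp
qed

lemma test_fun_ball_support:
  assumes "test_fun \<phi>"
  obtains R where "\<And>x. R \<le> norm x \<Longrightarrow> \<phi> x = 0"
proof -
  have "bounded (closure {x. \<phi> x \<noteq> 0})"
    using assms unfolding test_fun_def by (simp add: compact_imp_bounded)
  then obtain B where B: "\<And>x. x \<in> closure {x. \<phi> x \<noteq> 0} \<Longrightarrow> norm x \<le> B"
    by (auto simp: bounded_iff)
  have "\<phi> x = 0" if "B + 1 \<le> norm x" for x
  proof (rule ccontr)
    assume "\<phi> x \<noteq> 0"
    then have "x \<in> closure {x. \<phi> x \<noteq> 0}" by (intro subsetD[OF closure_subset]) simp
    then show False using B[of x] that by linarith
  qed
  then show ?thesis using that by blast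
qed

lemma integrable_mult_ball_support:
  fixes f \<phi> :: "'a::euclidean_space \<Rightarrow> real"
  assumes fm: "f \<in> borel_measurable lborel" and f2: "integrable lborel (\<lambda>x. (f x)\<^sup>2)"
    and c: "continuous_on UNIV \<phi>" and s: "\<And>x. R \<le> norm x \<Longrightarrow> \<phi> x = 0"
  shows "integrable lborel (\<lambda>x. f x * \<phi> x)"
proof -
  obtain C where C: "\<And>x. \<bar>\<phi> x\<bar> \<le> C" using bounded_continuous_ball_support[OF c s] by blast
  have "integrable lborel (\<lambda>x. C * ((1 + (f x)\<^sup>2) * indicator (cball 0 R) x))"
    using integrable_one_plus_square_indicator[OF f2, of "cball 0 R"] by simp
  then show ?thesis
  proof (rule Bochner_Integration.integrable_bound)
    show "(\<lambda>x. f x * \<phi> x) \<in> borel_measurable lborel"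
      using fm borel_measurable_continuous_onI[OF c] by measurable
    show "AE x in lborel. norm (f x * \<phi> x) \<le> norm (C * ((1 + (f x)\<^sup>2) * indicator (cball 0 R) x))"
    proof (rule AE_I2)
      fix x
      have C0: "0 \<le> C" using C[of x] by simp
      show "norm (f x * \<phi> x) \<le> norm (C * ((1 + (f x)\<^sup>2) * indicator (cball 0 R) x))"
      proof (cases "x \<in> cball 0 R")
        case True
        have "\<bar>f x * \<phi> x\<bar> \<le> (1 + (f x)\<^sup>2) * C"
          unfolding abs_mult by (intro mult_mono abs_le_one_plus_square C) auto
        then show ?thesis using True C0 by (simp add: abs_mult mult_ac)
      next
        case False
        then show ?thesis using s[of x] by simp
      qed
    qed
  qed
qed

lemma integrable_square_inner:
  fixes w :: "'a::euclidean_space \<Rightarrow> 'a"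
  assumes "w \<in> borel_measurable lborel" "integrable lborel (\<lambda>x. (norm (w x))\<^sup>2)" "i \<in> Basis"
  shows "integrable lborel (\<lambda>x. (w x \<bullet> i)\<^sup>2)"
proof (rule Bochner_Integration.integrable_bound[OF assms(2)])
  show "(\<lambda>x. (w x \<bullet> i)\<^sup>2) \<in> borel_measurable lborel" using assms(1) by measurable
  have "\<bar>w x \<bullet> i\<bar>\<^sup>2 \<le> (norm (w x))\<^sup>2" for x
    by (intro power_mono Basis_le_norm assms(3)) simp
  then show "AE x in lborel. norm ((w x \<bullet> i)\<^sup>2) \<le> norm ((norm (w x))\<^sup>2)" by simp
qed

lemma integrable_square_inner_diff:
  fixes w1 w2 :: "'a::euclidean_space \<Rightarrow> 'a"
  assumes "is_weak_grad v w1" "is_weak_grad v w2" "i \<in> Basis"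
  shows "integrable lborel (\<lambda>x. ((w1 x - w2 x) \<bullet> i)\<^sup>2)"
proof (rule Bochner_Integration.integrable_bound)
  have m1 [measurable]: "w1 \<in> borel_measurable lborel" and m2 [measurable]: "w2 \<in> borel_measurable lborel"
    and i1: "integrable lborel (\<lambda>x. (norm (w1 x))\<^sup>2)" and i2: "integrable lborel (\<lambda>x. (norm (w2 x))\<^sup>2)"
    using assms(1,2) unfolding is_weak_grad_def by auto
  show "integrable lborel (\<lambda>x. 2 * (w1 x \<bullet> i)\<^sup>2 + 2 * (w2 x \<bullet> i)\<^sup>2)"
    using integrable_square_inner[OF m1 i1 assms(3)] integrable_square_inner[OF m2 i2 assms(3)] by simp
  have "(a - b)\<^sup>2 \<le> 2 * a\<^sup>2 + 2 * b\<^sup>2" for a b :: real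
  proof -
    have "0 \<le> (a + b)\<^sup>2" by simp
    then show ?thesis unfolding power2_diff power2_sum by linarith
  qed
  then show "AE x in lborel. norm (((w1 x - w2 x) \<bullet> i)\<^sup>2) \<le> norm (2 * (w1 x \<bullet> i)\<^sup>2 + 2 * (w2 x \<bullet> i)\<^sup>2)"
    by (intro AE_I2) (simp add: inner_diff_left)
  show "(\<lambda>x. ((w1 x - w2 x) \<bullet> i)\<^sup>2) \<in> borel_measurable lborel" by measurable
qed

lemma weak_grad_diff_test_integral_eq_0:
  fixes w1 w2 :: "'a::euclidean_space \<Rightarrow> 'a"
  assumes w1: "is_weak_grad v w1" and w2: "is_weak_grad v w2" and t: "test_fun \<phi>" and i: "i \<in> Basis"
  shows "(\<integral>x. (w1 x - w2 x) \<bullet> i * \<phi> x \<partial>lborel) = 0"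
proof -
  obtain dphi where d: "\<forall>x. ((\<lambda>t. \<phi> (x + t *\<^sub>R i)) has_real_derivative dphi x) (at 0)"
    using test_fun_partial_deriv[OF t i] by blast
  obtain R where R: "\<And>x. R \<le> norm x \<Longrightarrow> \<phi> x = 0" using test_fun_ball_support[OF t] by blast
  have integrable: "integrable lborel (\<lambda>x. (w x \<bullet> i) * \<phi> x)" if "is_weak_grad v w" for w
    using that unfolding is_weak_grad_def
    by (intro integrable_mult_ball_support[OF _ integrable_square_inner continuous_on_test_fun[OF t] R] i)
       (auto simp: borel_measurable_inner)
  have "(\<integral>x. v x * dphi x \<partial>lborel) = - (\<integral>x. (w1 x \<bullet> i) * \<phi> x \<partial>lborel)"
    using w1 t i d unfolding is_weak_grad_def by blast
  moreover have "(\<integral>x. v x * dphi x \<partial>lborel) = - (\<integral>x. (w2 x \<bullet> i) * \<phi> x \<partial>lborel)"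
    using w2 t i d unfolding is_weak_grad_def by blast
  ultimately show ?thesis
    using integrable[OF w1] integrable[OF w2] by (simp add: inner_diff_left left_diff_distrib)
qed

lemma is_weak_grad_unique:
  assumes w1: "is_weak_grad v w1" and w2: "is_weak_grad v w2"
  shows "AE x in lborel. w1 x = w2 x"
proof -
  have [measurable]: "w1 \<in> borel_measurable lborel" "w2 \<in> borel_measurable lborel"
    using w1 w2 unfolding is_weak_grad_def by auto
  have "AE x in lborel. (w1 x - w2 x) \<bullet> i = 0" if i: "i \<in> Basis" for i
    by (rule fundamental_lemma_calculus_of_variations)
       (use integrable_square_inner_diff[OF w1 w2 i] weak_grad_diff_test_integral_eq_0[OF w1 w2 _ i]
        in auto)
  then have "AE x in lborel. \<forall>i\<in>Basis. (w1 x - w2 x) \<bullet> i = 0"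
    by (rule AE_finite_allI[OF finite_Basis])
  then show ?thesis
    by (rule AE_mp) (auto intro!: AE_I2 simp: euclidean_all_zero_iff)
qed

lemma grad_sq_eq_weak_grad:
  assumes "is_weak_grad v w"
  shows "grad_sq v = (\<integral>x. (norm (w x))\<^sup>2 \<partial>lborel)"
proof -
  have wgrad: "is_weak_grad v (wgrad v)" unfolding wgrad_def by (rule someI[of "is_weak_grad v", OF assms])
  then have [measurable]: "wgrad v \<in> borel_measurable lborel" "w \<in> borel_measurable lborel"
    using assms by (auto simp: is_weak_grad_def)
  have "AE x in lborel. wgrad v x = w x" using wgrad assms by (rule is_weak_grad_unique)
  then have "AE x in lborel. (norm (wgrad v x))\<^sup>2 = (norm (w x))\<^sup>2"
    by (rule AE_mp) (auto intro!: AE_I2)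
  then show ?thesis unfolding grad_sq_def by (intro integral_cong_AE) auto
qed

lemma has_derivative_imp_partial_deriv:
  fixes v :: "'a::euclidean_space \<Rightarrow> real"
  assumes "(v has_derivative (\<lambda>h. w \<bullet> h)) (at x)"
  shows "((\<lambda>t. v (x + t *\<^sub>R i)) has_real_derivative (w \<bullet> i)) (at 0)"
proof -
  have line: "((\<lambda>t::real. x + t *\<^sub>R i) has_derivative (\<lambda>t. t *\<^sub>R i)) (at 0)"
    by (auto intro!: derivative_eq_intros)
  have "(v has_derivative (\<lambda>h. w \<bullet> h)) (at (x + 0 *\<^sub>R i))" using assms by simp
  from has_derivative_compose[OF line this]
  have "((\<lambda>t. v (x + t *\<^sub>R i)) has_derivative (\<lambda>t. w \<bullet> (t *\<^sub>R i))) (at 0)"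
    by (simp add: o_def)
  moreover have "(\<lambda>t. w \<bullet> (t *\<^sub>R i)) = (*) (w \<bullet> i)" by (auto simp: fun_eq_iff)
  ultimately show ?thesis by (simp add: has_field_derivative_def)
qed

context
  fixes v :: "'a::euclidean_space \<Rightarrow> real" and w :: "'a \<Rightarrow> 'a" and R :: real
  assumes dv: "\<And>x. (v has_derivative (\<lambda>h. w x \<bullet> h)) (at x)"
    and cw: "continuous_on UNIV w"
    and sv: "\<And>x. R \<le> norm x \<Longrightarrow> v x = 0 \<and> w x = 0"
begin

lemma continuous_on_C1: "continuous_on UNIV v"
  by (intro continuous_at_imp_continuous_on ballI has_derivative_continuous[OF dv])

lemma is_weak_grad_C1: "is_weak_grad v w"
proof -
  have "(\<integral>x. v x * dphi x \<partial>lborel) = - (\<integral>x. (w x \<bullet> i) * \<phi> x \<partial>lborel)"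
    if t: "test_fun \<phi>" and i: "i \<in> Basis"
      and d: "\<forall>x. ((\<lambda>t. \<phi> (x + t *\<^sub>R i)) has_real_derivative dphi x) (at 0)" for \<phi> dphi i
  proof -
    note c\<phi> = continuous_on_test_fun[OF t] and cd = continuous_on_test_fun_partial_deriv[OF t i d]
    note cv = continuous_on_C1
    let ?D = "\<lambda>x. (w x \<bullet> i) * \<phi> x + v x * dphi x"
    have "(\<integral>x. ?D x \<partial>lborel) = 0"
    proof (rule integral_partial_deriv_eq_0[where F="\<lambda>x. v x * \<phi> x" and i=i and R=R])
      show "continuous_on UNIV (\<lambda>x. v x * \<phi> x)" using cv c\<phi> by (intro continuous_intros)
      show "continuous_on UNIV ?D" using cv c\<phi> cd cw by (intro continuous_intros) auto
      show "norm i \<le> 1" using i by simp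
      show "R \<le> norm x \<Longrightarrow> v x * \<phi> x = 0 \<and> ?D x = 0" for x using sv[of x] by simp
      show "((\<lambda>t. v (x + t *\<^sub>R i) * \<phi> (x + t *\<^sub>R i)) has_real_derivative ?D x) (at 0)" for x
        using DERIV_mult[OF has_derivative_imp_partial_deriv[OF dv] d[rule_format]]
        by (simp add: mult.commute)
    qed
    moreover have "(\<integral>x. ?D x \<partial>lborel) = (\<integral>x. (w x \<bullet> i) * \<phi> x \<partial>lborel) + (\<integral>x. v x * dphi x \<partial>lborel)"
    proof (rule Bochner_Integration.integral_add)
      show "integrable lborel (\<lambda>x. (w x \<bullet> i) * \<phi> x)"
        by (rule integrable_continuous_ball_support[where R=R]) (use cw c\<phi> sv in \<open>auto intro!: continuous_intros\<close>)
      show "integrable lborel (\<lambda>x. v x * dphi x)"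
        by (rule integrable_continuous_ball_support[where R=R]) (use cv cd sv in \<open>auto intro!: continuous_intros\<close>)
    qed
    ultimately show ?thesis by simp
  qed
  moreover have "integrable lborel (\<lambda>x. (norm (w x))\<^sup>2)"
    by (rule integrable_continuous_ball_support[where R=R]) (use cw sv in \<open>auto intro!: continuous_intros\<close>)
  moreover have "w \<in> borel_measurable lborel" using cw by (simp add: borel_measurable_continuous_onI)
  ultimately show ?thesis unfolding is_weak_grad_def by blast
qed

lemma H1_C1: "v \<in> H1"
proof -
  have "integrable lborel (\<lambda>x. (v x)\<^sup>2)"
    by (rule integrable_continuous_ball_support[where R=R])
       (use continuous_on_C1 sv in \<open>auto intro!: continuous_intros\<close>)
  then show ?thesis unfolding H1_def
    using is_weak_grad_C1 borel_measurable_continuous_onI[OF continuous_on_C1] by auto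
qed

end

section \<open>Radial functions\<close>

definition radial_fun :: "(real \<Rightarrow> real) \<Rightarrow> 'a::euclidean_space \<Rightarrow> real" where
  "radial_fun \<Psi> x = \<Psi> (x \<bullet> x)"

definition radial_grad :: "(real \<Rightarrow> real) \<Rightarrow> 'a::euclidean_space \<Rightarrow> 'a" where
  "radial_grad \<Psi>' x = (2 * \<Psi>' (x \<bullet> x)) *\<^sub>R x"

lemma radial_fun_diff: "radial_fun (\<lambda>\<rho>. \<Psi>1 \<rho> - \<Psi>2 \<rho>) = (\<lambda>x. radial_fun \<Psi>1 x - radial_fun \<Psi>2 x)"
  by (simp add: radial_fun_def[abs_def])

lemma radial_radial_fun: "radial (radial_fun \<Psi>)"
  unfolding radial_def radial_fun_def by (metis power2_norm_eq_inner)

lemma inner_self_le_iff_norm_le: "0 \<le> R \<Longrightarrow> x \<bullet> x \<le> R \<longleftrightarrow> norm x \<le> sqrt R"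
  by (metis norm_eq_sqrt_inner inner_ge_zero real_sqrt_le_iff)

lemma inner_self_less_one_iff: "x \<bullet> x < 1 \<longleftrightarrow> x \<in> ball (0::'a::euclidean_space) 1"
  by (simp add: power2_norm_eq_inner[symmetric] abs_square_less_1)

text \<open>Profiles are functions of \<open>|x|\<^sup>2\<close> rather than of \<open>|x|\<close>, so that the radial function is
  \<open>C\<^sup>1\<close> also at the origin.\<close>

locale radial_profile =
  fixes \<Psi> \<Psi>' :: "real \<Rightarrow> real" and R :: real
  assumes DERIV_profile: "\<And>\<rho>. (\<Psi> has_real_derivative \<Psi>' \<rho>) (at \<rho>)"
    and continuous_on_profile_deriv: "continuous_on UNIV \<Psi>'"
    and profile_support: "\<And>\<rho>. R \<le> \<rho> \<Longrightarrow> \<Psi> \<rho> = 0 \<and> \<Psi>' \<rho> = 0"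
begin

lemma has_derivative_radial_fun:
  "(radial_fun \<Psi> has_derivative (\<lambda>h. radial_grad \<Psi>' x \<bullet> h)) (at (x::'a::euclidean_space))"
proof -
  have inner: "((\<lambda>x. x \<bullet> x) has_derivative (\<lambda>h. x \<bullet> h + h \<bullet> x)) (at x)"
    by (rule has_derivative_inner[OF has_derivative_ident has_derivative_ident])
  have "(\<Psi> has_derivative (\<lambda>y. \<Psi>' (x \<bullet> x) * y)) (at (x \<bullet> x))"
    using DERIV_profile[of "x \<bullet> x"] by (simp add: has_field_derivative_def)
  from has_derivative_compose[OF inner this]
  have "((\<lambda>x. \<Psi> (x \<bullet> x)) has_derivative (\<lambda>h. \<Psi>' (x \<bullet> x) * (x \<bullet> h + h \<bullet> x))) (at x)"
    by (simp add: o_def)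
  moreover have "(\<lambda>h. \<Psi>' (x \<bullet> x) * (x \<bullet> h + h \<bullet> x)) = (\<lambda>h. radial_grad \<Psi>' x \<bullet> h)"
    by (auto simp: fun_eq_iff radial_grad_def inner_commute algebra_simps)
  ultimately show ?thesis unfolding radial_fun_def[abs_def] by simp
qed

lemma continuous_on_radial_grad: "continuous_on UNIV (radial_grad \<Psi>' :: 'a::euclidean_space \<Rightarrow> 'a)"
  unfolding radial_grad_def[abs_def]
  by (intro continuous_intros continuous_on_compose2[OF continuous_on_profile_deriv]) auto

lemma continuous_on_radial_fun: "continuous_on UNIV (radial_fun \<Psi> :: 'a::euclidean_space \<Rightarrow> real)"
  by (intro continuous_at_imp_continuous_on ballI has_derivative_continuous[OF has_derivative_radial_fun])

lemma radial_support:
  fixes x :: "'a::euclidean_space"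
  assumes "sqrt \<bar>R\<bar> \<le> norm x"
  shows "radial_fun \<Psi> x = 0 \<and> radial_grad \<Psi>' x = 0"
proof -
  have "(sqrt \<bar>R\<bar>)\<^sup>2 \<le> (norm x)\<^sup>2" using assms by (intro power_mono) auto
  then have "R \<le> x \<bullet> x" by (simp add: power2_norm_eq_inner)
  then show ?thesis using profile_support by (simp add: radial_fun_def radial_grad_def)
qed

lemma is_weak_grad_radial: "is_weak_grad (radial_fun \<Psi> :: 'a::euclidean_space \<Rightarrow> real) (radial_grad \<Psi>')"
  by (rule is_weak_grad_C1[where R="sqrt \<bar>R\<bar>", OF has_derivative_radial_fun continuous_on_radial_grad radial_support])

lemma radial_fun_H1r: "(radial_fun \<Psi> :: 'a::euclidean_space \<Rightarrow> real) \<in> H1r"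
proof -
  have "(radial_fun \<Psi> :: 'a \<Rightarrow> real) \<in> H1"
    by (rule H1_C1[where R="sqrt \<bar>R\<bar>", OF has_derivative_radial_fun continuous_on_radial_grad])
       (rule radial_support)
  with radial_radial_fun show ?thesis by (simp add: H1r_def)
qed

lemma grad_sq_radial:
  "grad_sq (radial_fun \<Psi> :: 'a::euclidean_space \<Rightarrow> real) = (\<integral>x. (norm (radial_grad \<Psi>' x :: 'a))\<^sup>2 \<partial>lborel)"
  by (rule grad_sq_eq_weak_grad[OF is_weak_grad_radial])

lemma integral_radial_sq_le:
  assumes R: "0 < R" and bound: "\<And>\<rho>. 0 \<le> \<rho> \<Longrightarrow> \<rho> \<le> R \<Longrightarrow> \<bar>\<Psi> \<rho>\<bar> \<le> \<epsilon>"
  shows "(\<integral>x. (radial_fun \<Psi> (x::'a::euclidean_space))\<^sup>2 \<partial>lborel) \<le> \<epsilon>\<^sup>2 * measure lborel (cball (0::'a) (sqrt R))"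
proof (rule integral_le_cball_bound)
  show "integrable lborel (\<lambda>x::'a. (radial_fun \<Psi> x)\<^sup>2)"
    by (rule integrable_continuous_ball_support[where R="sqrt \<bar>R\<bar>"])
       (use continuous_on_radial_fun radial_support in \<open>auto intro!: continuous_intros\<close>)
  show "(radial_fun \<Psi> x)\<^sup>2 \<le> \<epsilon>\<^sup>2" if "norm x \<le> sqrt R" for x :: 'a
  proof -
    have "\<bar>\<Psi> (x \<bullet> x)\<bar> \<le> \<epsilon>" using bound inner_self_le_iff_norm_le[of R x] R that by simp
    then show ?thesis unfolding radial_fun_def by (metis abs_ge_zero power2_abs power_mono)
  qed
  show "(radial_fun \<Psi> x)\<^sup>2 = 0" if "sqrt R < norm x" for x :: 'a
    using radial_support[of x] that R by simp
qed

lemma integral_radial_grad_sq_le: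
  assumes R: "0 < R" and bound: "\<And>\<rho>. 0 \<le> \<rho> \<Longrightarrow> \<rho> \<le> R \<Longrightarrow> \<bar>\<Psi>' \<rho>\<bar> \<le> \<epsilon>"
  shows "(\<integral>x. (norm (radial_grad \<Psi>' x :: 'a::euclidean_space))\<^sup>2 \<partial>lborel)
    \<le> 4 * R * \<epsilon>\<^sup>2 * measure lborel (cball (0::'a) (sqrt R))"
proof (rule integral_le_cball_bound)
  show "integrable lborel (\<lambda>x::'a. (norm (radial_grad \<Psi>' x))\<^sup>2)"
    by (rule integrable_continuous_ball_support[where R="sqrt \<bar>R\<bar>"])
       (use continuous_on_radial_grad radial_support in \<open>auto intro!: continuous_intros\<close>)
  show "(norm (radial_grad \<Psi>' x))\<^sup>2 \<le> 4 * R * \<epsilon>\<^sup>2" if "norm x \<le> sqrt R" for x :: 'a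
  proof -
    have x: "x \<bullet> x \<le> R" using inner_self_le_iff_norm_le[of R x] R that by simp
    then have "\<bar>\<Psi>' (x \<bullet> x)\<bar> \<le> \<epsilon>" using bound by simp
    then have "(\<Psi>' (x \<bullet> x))\<^sup>2 \<le> \<epsilon>\<^sup>2" by (metis abs_ge_zero power2_abs power_mono)
    then have "4 * (\<Psi>' (x \<bullet> x))\<^sup>2 * (x \<bullet> x) \<le> 4 * \<epsilon>\<^sup>2 * R"
      using x by (intro mult_mono) auto
    then show ?thesis by (simp add: radial_grad_def power2_norm_eq_inner power_mult_distrib mult_ac)
  qed
  show "(norm (radial_grad \<Psi>' x))\<^sup>2 = 0" if "sqrt R < norm x" for x :: 'a
    using radial_support[of x] that R by simp
qed

lemma H1norm_radial_le:
  assumes R: "0 < R" and bound: "\<And>\<rho>. 0 \<le> \<rho> \<Longrightarrow> \<rho> \<le> R \<Longrightarrow> \<bar>\<Psi> \<rho>\<bar> \<le> \<epsilon> \<and> \<bar>\<Psi>' \<rho>\<bar> \<le> \<epsilon>"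
  shows "H1norm (radial_fun \<Psi> :: 'a::euclidean_space \<Rightarrow> real)
    \<le> \<epsilon> * sqrt (measure lborel (cball (0::'a) (sqrt R)) * (1 + 4 * R))"
proof -
  let ?V = "measure lborel (cball (0::'a) (sqrt R))"
  have "0 \<le> \<epsilon>" using bound[of 0] R by auto
  have "H1norm (radial_fun \<Psi> :: 'a \<Rightarrow> real)
      = sqrt ((\<integral>x. (radial_fun \<Psi> (x::'a))\<^sup>2 \<partial>lborel) + (\<integral>x. (norm (radial_grad \<Psi>' x :: 'a))\<^sup>2 \<partial>lborel))"
    unfolding H1norm_def grad_sq_radial ..
  also have "\<dots> \<le> sqrt (\<epsilon>\<^sup>2 * ?V + 4 * R * \<epsilon>\<^sup>2 * ?V)"
    using integral_radial_sq_le[OF R, of \<epsilon>] integral_radial_grad_sq_le[OF R, of \<epsilon>] bound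
    by (intro real_sqrt_le_mono add_mono) auto
  also have "\<epsilon>\<^sup>2 * ?V + 4 * R * \<epsilon>\<^sup>2 * ?V = \<epsilon>\<^sup>2 * (?V * (1 + 4 * R))" by (simp add: algebra_simps)
  also have "sqrt \<dots> = \<epsilon> * sqrt (?V * (1 + 4 * R))" using \<open>0 \<le> \<epsilon>\<close> by (simp add: real_sqrt_mult)
  finally show ?thesis .
qed

end

lemma radial_profile_diff:
  assumes "radial_profile \<Psi>1 \<Psi>1' R" "radial_profile \<Psi>2 \<Psi>2' R"
  shows "radial_profile (\<lambda>\<rho>. \<Psi>1 \<rho> - \<Psi>2 \<rho>) (\<lambda>\<rho>. \<Psi>1' \<rho> - \<Psi>2' \<rho>) R"
  using assms unfolding radial_profile_def by (auto intro!: DERIV_diff continuous_intros)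

section \<open>The functional on compactly supported functions\<close>

lemma DERIV_Gprim:
  assumes g: "continuous_on UNIV g"
  shows "(Gprim g has_real_derivative g x) (at x)"
proof -
  let ?a = "min 0 x - 1" and ?b = "max 0 x + 1"
  have "((\<lambda>u. LBINT y=ereal 0..u. g y) has_vector_derivative g x) (at x within {?a..?b})"
    by (rule interval_integral_FTC2) (auto intro: continuous_on_subset[OF g])
  then have "((\<lambda>u. LBINT y=ereal 0..u. g y) has_vector_derivative g x) (at x within {?a<..<?b})"
    by (rule has_vector_derivative_within_subset) auto
  then have "((\<lambda>u. LBINT y=ereal 0..u. g y) has_vector_derivative g x) (at x)"
    by (rule has_vector_derivative_within_open[of x "{?a<..<?b}", THEN iffD1, rotated 2]) auto
  then show ?thesis
    unfolding Gprim_def[abs_def] by (simp add: has_real_derivative_iff_has_vector_derivative zero_ereal_def)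
qed

lemma continuous_on_Gprim: "continuous_on UNIV g \<Longrightarrow> continuous_on S (Gprim g)"
  by (meson DERIV_continuous DERIV_Gprim continuous_at_imp_continuous_on)

lemma Gprim_0 [simp]: "Gprim g 0 = 0"
  by (simp add: Gprim_def zero_ereal_def)

lemma Gprim_minus:
  assumes g: "continuous_on UNIV g" and odd: "\<forall>s. g (- s) = - g s"
  shows "Gprim g (- s) = Gprim g s"
proof -
  have "\<forall>t. ((\<lambda>t. Gprim g (- t) - Gprim g t) has_real_derivative 0) (at t)"
  proof
    fix t
    have "((\<lambda>t. Gprim g (- t) - Gprim g t) has_real_derivative g (- t) * (- 1) - g t) (at t)"
      by (intro DERIV_diff DERIV_chain2[OF DERIV_Gprim[OF g]] DERIV_Gprim[OF g] derivative_eq_intros) auto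
    then show "((\<lambda>t. Gprim g (- t) - Gprim g t) has_real_derivative 0) (at t)" using odd by simp
  qed
  then have "(\<lambda>t. Gprim g (- t) - Gprim g t) s = (\<lambda>t. Gprim g (- t) - Gprim g t) 0"
    by (rule DERIV_isconst_all)
  then show ?thesis by simp
qed

lemma exists_Gprim_gt_below_lambda0:
  assumes g4: "\<exists>s0>0. Gprim g s0 > 0" and lam: "ereal lam < lambda0 g"
  obtains s where "exp lam / 2 * s\<^sup>2 < Gprim g s"
proof -
  let ?S = "{Gprim g s / s\<^sup>2 | s. s \<noteq> 0}"
  obtain s0 where s0: "s0 > 0" "Gprim g s0 > 0" using g4 by blast
  have s0S: "Gprim g s0 / s0\<^sup>2 \<in> ?S" using s0 by auto
  have "\<exists>x\<in>?S. exp lam / 2 < x"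
  proof (cases "bdd_above ?S")
    case True
    then have "lam < ln (2 * Sup ?S)" using lam by (simp add: lambda0_def)
    moreover have "Gprim g s0 / s0\<^sup>2 \<le> Sup ?S" by (rule cSup_upper[OF s0S True])
    moreover have "Gprim g s0 / s0\<^sup>2 > 0" using s0 by simp
    ultimately have lt: "lam < ln (2 * Sup ?S)" and pos: "0 < 2 * Sup ?S" by linarith+
    have "exp lam < exp (ln (2 * Sup ?S))" using lt by (rule exp_less_mono)
    also have "exp (ln (2 * Sup ?S)) = 2 * Sup ?S" using pos by (rule exp_ln)
    finally have "exp lam / 2 < Sup ?S" by simp
    then show ?thesis using less_cSup_iff[of ?S] True s0S by blast
  next
    case False
    then show ?thesis unfolding bdd_above_def by (meson linorder_not_le)
  qed
  then obtain s where "s \<noteq> 0" "exp lam / 2 < Gprim g s / s\<^sup>2" by blast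
  then have "exp lam / 2 * s\<^sup>2 < Gprim g s" by (simp add: field_simps)
  then show ?thesis by (rule that)
qed

definition Jpot :: "(real \<Rightarrow> real) \<Rightarrow> real \<Rightarrow> real \<Rightarrow> real" where
  "Jpot g lam y = exp lam / 2 * (fcv y)\<^sup>2 - Gprim g (fcv y)"

lemma continuous_on_Jpot: "continuous_on UNIV g \<Longrightarrow> continuous_on S (Jpot g lam)"
  unfolding Jpot_def[abs_def]
  by (intro continuous_intros continuous_on_compose2[OF continuous_on_Gprim[of g UNIV]] continuous_on_fcv) auto

lemma Jpot_0 [simp]: "Jpot g lam 0 = 0"
  by (simp add: Jpot_def)

lemma Jpot_minus:
  assumes "continuous_on UNIV g" "\<forall>s. g (- s) = - g s"
  shows "Jpot g lam (- t) = Jpot g lam t"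
  by (simp add: Jpot_def fcv_minus Gprim_minus[OF assms])

lemma exists_Jpot_neg:
  assumes "\<exists>s0>0. Gprim g s0 > 0" and "ereal lam < lambda0 g"
  obtains a where "Jpot g lam a < 0"
proof -
  obtain s where "exp lam / 2 * s\<^sup>2 < Gprim g s" by (rule exists_Gprim_gt_below_lambda0[OF assms])
  then have "Jpot g lam (fcv_inv s) < 0" by (simp add: Jpot_def)
  then show ?thesis by (rule that)
qed

lemma Jpot_bounded:
  assumes "continuous_on UNIV g"
  obtains C where "C \<ge> 0" "\<And>t. \<bar>t\<bar> \<le> b \<Longrightarrow> \<bar>Jpot g lam t\<bar> \<le> C"
proof -
  have "compact (Jpot g lam ` {-b..b})"
    by (rule compact_continuous_image[OF continuous_on_Jpot[OF assms]]) simp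
  then obtain C where C: "\<forall>y\<in>Jpot g lam ` {-b..b}. norm y \<le> C"
    using compact_imp_bounded bounded_iff by metis
  have "\<bar>Jpot g lam t\<bar> \<le> max C 0" if "\<bar>t\<bar> \<le> b" for t
  proof -
    have "Jpot g lam t \<in> Jpot g lam ` {-b..b}" using that by (intro imageI) (simp add: abs_le_iff)
    then have "norm (Jpot g lam t) \<le> C" using C by blast
    then show ?thesis by simp
  qed
  then show ?thesis using that[of "max C 0"] by simp
qed

lemma Jfun_ball_support:
  fixes v :: "'a::euclidean_space \<Rightarrow> real"
  assumes g: "continuous_on UNIV g" and cv: "continuous_on UNIV v" and sv: "\<And>x. R \<le> norm x \<Longrightarrow> v x = 0"
  shows "Jfun g lam v = 1/2 * grad_sq v + (\<integral>x. Jpot g lam (v x) \<partial>lborel)"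
proof -
  have fv: "continuous_on UNIV (\<lambda>x. fcv (v x))"
    by (rule continuous_on_compose2[OF continuous_on_fcv cv]) auto
  have "integrable lborel (\<lambda>x. (fcv (v x))\<^sup>2)"
    by (rule integrable_continuous_ball_support[of _ R]) (use fv sv in \<open>auto intro: continuous_intros\<close>)
  moreover have "integrable lborel (\<lambda>x. Gprim g (fcv (v x)))"
    by (rule integrable_continuous_ball_support[of _ R])
       (use sv in \<open>auto intro: continuous_on_compose2[OF continuous_on_Gprim[OF g] fv]\<close>)
  ultimately have "(\<integral>x. Jpot g lam (v x) \<partial>lborel)
      = (\<integral>x. exp lam / 2 * (fcv (v x))\<^sup>2 \<partial>lborel) - (\<integral>x. Gprim g (fcv (v x)) \<partial>lborel)"
    unfolding Jpot_def by (intro Bochner_Integration.integral_diff) auto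
  then show ?thesis unfolding Jfun_def by simp
qed

lemma integral_rescale:
  fixes F :: "'a::euclidean_space \<Rightarrow> real"
  assumes F: "F \<in> borel_measurable borel" and T: "T > 0"
  shows "(\<integral>x. F ((1/T) *\<^sub>R x) \<partial>lborel) = T ^ DIM('a) * (\<integral>x. F x \<partial>lborel)"
proof -
  let ?G = "\<lambda>x. F ((1/T) *\<^sub>R x)"
  have G: "?G \<in> borel_measurable borel" using F by measurable
  have "(\<integral>x. ?G x \<partial>lborel) = (\<integral>x. ?G x \<partial>density (distr lborel borel (\<lambda>x. 0 + T *\<^sub>R x)) (\<lambda>_. ennreal (\<bar>T\<bar> ^ DIM('a))))"
    using lborel_affine[of T "0::'a"] T by (simp add: ennreal_power)
  also have "\<dots> = (\<integral>x. \<bar>T\<bar> ^ DIM('a) *\<^sub>R ?G x \<partial>distr lborel borel (\<lambda>x. 0 + T *\<^sub>R x))"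
    by (rule integral_density) (use G in auto)
  also have "\<dots> = (\<integral>x. \<bar>T\<bar> ^ DIM('a) *\<^sub>R ?G (0 + T *\<^sub>R x) \<partial>lborel)"
    by (rule integral_distr) (use G in auto)
  also have "\<dots> = T ^ DIM('a) * (\<integral>x. F x \<partial>lborel)" using T by simp
  finally show ?thesis .
qed

section \<open>An odd family of radial test paths\<close>

definition cutoff :: "('k \<Rightarrow> real \<Rightarrow> real) \<Rightarrow> 'k \<Rightarrow> real \<Rightarrow> real" where
  "cutoff P \<xi> r = flat_exp 0 (1 - r) * P \<xi> r"

definition cutoff' :: "('k \<Rightarrow> real \<Rightarrow> real) \<Rightarrow> ('k \<Rightarrow> real \<Rightarrow> real) \<Rightarrow> 'k \<Rightarrow> real \<Rightarrow> real" where
  "cutoff' P P' \<xi> r = - flat_exp 2 (1 - r) * P \<xi> r + flat_exp 0 (1 - r) * P' \<xi> r"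

text \<open>As \<open>L \<rightarrow> \<infinity>\<close>, \<open>sat_profile P a L \<xi> r\<close> tends to \<open>a * sgn (P \<xi> r)\<close> for \<open>r < 1\<close>, while it
  vanishes for \<open>r \<ge> 1\<close>.\<close>

definition sat_profile :: "('k \<Rightarrow> real \<Rightarrow> real) \<Rightarrow> real \<Rightarrow> real \<Rightarrow> 'k \<Rightarrow> real \<Rightarrow> real" where
  "sat_profile P a L \<xi> r = a * (2/pi) * arctan (L * cutoff P \<xi> r)"

definition sat_profile' ::
    "('k \<Rightarrow> real \<Rightarrow> real) \<Rightarrow> ('k \<Rightarrow> real \<Rightarrow> real) \<Rightarrow> real \<Rightarrow> real \<Rightarrow> 'k \<Rightarrow> real \<Rightarrow> real" where
  "sat_profile' P P' a L \<xi> r = a * (2/pi) * (L * cutoff' P P' \<xi> r) / (1 + (L * cutoff P \<xi> r)\<^sup>2)"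

definition scaled_profile :: "('k \<Rightarrow> real \<Rightarrow> real) \<Rightarrow> real \<Rightarrow> real \<Rightarrow> real \<Rightarrow> 'k \<Rightarrow> real \<Rightarrow> real" where
  "scaled_profile P a L T \<xi> \<rho> = sat_profile P a L \<xi> (\<rho> / T\<^sup>2)"

definition scaled_profile' ::
    "('k \<Rightarrow> real \<Rightarrow> real) \<Rightarrow> ('k \<Rightarrow> real \<Rightarrow> real) \<Rightarrow> real \<Rightarrow> real \<Rightarrow> real \<Rightarrow> 'k \<Rightarrow> real \<Rightarrow> real" where
  "scaled_profile' P P' a L T \<xi> \<rho> = sat_profile' P P' a L \<xi> (\<rho> / T\<^sup>2) / T\<^sup>2"

lemma abs_sat_profile_le: "\<bar>sat_profile P a L \<xi> r\<bar> \<le> \<bar>a\<bar>"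
proof -
  have "\<bar>arctan (L * cutoff P \<xi> r)\<bar> \<le> pi / 2" using arctan_bounded[of "L * cutoff P \<xi> r"] by linarith
  then have "\<bar>2 / pi * arctan (L * cutoff P \<xi> r)\<bar> \<le> 1" by (simp add: abs_mult field_simps)
  then have "\<bar>a\<bar> * \<bar>2 / pi * arctan (L * cutoff P \<xi> r)\<bar> \<le> \<bar>a\<bar> * 1" by (intro mult_left_mono) auto
  then show ?thesis by (simp add: sat_profile_def abs_mult mult_ac)
qed

lemma sat_profile_support: "1 \<le> r \<Longrightarrow> sat_profile P a L \<xi> r = 0 \<and> sat_profile' P P' a L \<xi> r = 0"
  by (simp add: sat_profile_def sat_profile'_def cutoff_def cutoff'_def flat_exp_def)

lemma exists_scale_small:
  fixes M \<beta> :: real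
  assumes "0 \<le> M" "0 < \<beta>"
  shows "\<exists>T>0. M / (2 * T\<^sup>2) < \<beta>"
proof (intro exI conjI)
  define T where "T = M / (2 * \<beta>) + 1"
  have "T \<ge> 1" using assms by (simp add: T_def)
  then have "T \<le> T\<^sup>2" using power_increasing[of 1 2 T] by simp
  moreover have "M / (2 * \<beta>) < T" by (simp add: T_def)
  ultimately have "M / (2 * \<beta>) < T\<^sup>2" by linarith
  then show "M / (2 * T\<^sup>2) < \<beta>" using assms \<open>T \<ge> 1\<close> by (simp add: field_simps)
  show "T > 0" using \<open>T \<ge> 1\<close> by simp
qed

locale odd_family =
  fixes P P' :: "'k::euclidean_space \<Rightarrow> real \<Rightarrow> real"
  assumes DERIV_family: "\<And>\<xi> r. (P \<xi> has_real_derivative P' \<xi> r) (at r)"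
    and continuous_on_family: "continuous_on UNIV (\<lambda>z. P (fst z) (snd z))"
    and continuous_on_family_deriv: "continuous_on UNIV (\<lambda>z. P' (fst z) (snd z))"
    and family_odd: "\<And>\<xi> r. P (- \<xi>) r = - P \<xi> r"
begin

lemma DERIV_sat_profile: "(sat_profile P a L \<xi> has_real_derivative sat_profile' P P' a L \<xi> r) (at r)"
proof -
  have "(flat_exp 0 has_real_derivative flat_exp 2 z) (at z)" for z
    using DERIV_flat_exp[of 0 z] by (simp add: numeral_2_eq_2)
  then have "((\<lambda>r. flat_exp 0 (1 - r)) has_real_derivative flat_exp 2 (1 - r) * (0 - 1)) (at r)"
    by (rule DERIV_chain2) (auto intro!: derivative_eq_intros)
  then have "((\<lambda>r. flat_exp 0 (1 - r) * P \<xi> r) has_real_derivative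
       flat_exp 2 (1 - r) * (0 - 1) * P \<xi> r + P' \<xi> r * flat_exp 0 (1 - r)) (at r)"
    by (rule DERIV_mult[OF _ DERIV_family])
  then have "(cutoff P \<xi> has_real_derivative cutoff' P P' \<xi> r) (at r)"
    unfolding cutoff_def[abs_def] cutoff'_def by (simp add: algebra_simps)
  then have "((\<lambda>r. a * (2/pi) * arctan (L * cutoff P \<xi> r)) has_real_derivative
      a * (2/pi) * (inverse (1 + (L * cutoff P \<xi> r)\<^sup>2) * (L * cutoff' P P' \<xi> r))) (at r)"
    by (intro DERIV_cmult DERIV_chain2[OF DERIV_arctan])
  then show ?thesis unfolding sat_profile_def[abs_def] sat_profile'_def by (simp add: divide_inverse mult_ac)
qed

lemma continuous_on_family_comp:
  "continuous_on S f \<Longrightarrow> continuous_on S g \<Longrightarrow> continuous_on S (\<lambda>z. P (f z) (g z))"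
  using continuous_on_compose[OF continuous_on_Pair continuous_on_subset[OF continuous_on_family]]
  by (simp add: o_def)

lemma continuous_on_family_deriv_comp:
  "continuous_on S f \<Longrightarrow> continuous_on S g \<Longrightarrow> continuous_on S (\<lambda>z. P' (f z) (g z))"
  using continuous_on_compose[OF continuous_on_Pair continuous_on_subset[OF continuous_on_family_deriv]]
  by (simp add: o_def)

lemma continuous_on_sat_profile_comp:
  "continuous_on S f \<Longrightarrow> continuous_on S g \<Longrightarrow> continuous_on S (\<lambda>z. sat_profile P a L (f z) (g z))"
  unfolding sat_profile_def cutoff_def
  by (intro continuous_intros continuous_on_flat_exp_comp continuous_on_family_comp)

lemma continuous_on_sat_profile'_comp:
  "continuous_on S f \<Longrightarrow> continuous_on S g \<Longrightarrow> continuous_on S (\<lambda>z. sat_profile' P P' a L (f z) (g z))"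
  unfolding sat_profile'_def cutoff_def cutoff'_def
  by (intro continuous_intros continuous_on_flat_exp_comp continuous_on_family_comp
      continuous_on_family_deriv_comp) (simp_all add: add_nonneg_eq_0_iff)

lemma radial_profile_scaled_profile:
  assumes T: "T > 0"
  shows "radial_profile (scaled_profile P a L T \<xi>) (scaled_profile' P P' a L T \<xi>) (T\<^sup>2)"
proof
  fix \<rho>
  have "((\<lambda>\<rho>. sat_profile P a L \<xi> (\<rho> / T\<^sup>2)) has_real_derivative sat_profile' P P' a L \<xi> (\<rho> / T\<^sup>2) * (1 / T\<^sup>2)) (at \<rho>)"
    by (rule DERIV_chain2[OF DERIV_sat_profile DERIV_cdivide[OF DERIV_ident]])
  then show "(scaled_profile P a L T \<xi> has_real_derivative scaled_profile' P P' a L T \<xi> \<rho>) (at \<rho>)"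
    unfolding scaled_profile_def[abs_def] scaled_profile'_def by simp
next
  show "continuous_on UNIV (scaled_profile' P P' a L T \<xi>)"
    unfolding scaled_profile'_def[abs_def] by (intro continuous_intros continuous_on_sat_profile'_comp) (use T in auto)
next
  fix \<rho> assume "T\<^sup>2 \<le> \<rho>"
  then have "1 \<le> \<rho> / T\<^sup>2" using T by simp
  then show "scaled_profile P a L T \<xi> \<rho> = 0 \<and> scaled_profile' P P' a L T \<xi> \<rho> = 0"
    using sat_profile_support[of "\<rho> / T\<^sup>2" P a L \<xi> P'] by (simp add: scaled_profile_def scaled_profile'_def)
qed

lemma radial_profile_sat_profile: "radial_profile (sat_profile P a L \<xi>) (sat_profile' P P' a L \<xi>) 1"
  using radial_profile_scaled_profile[of 1 a L \<xi>]
  by (simp add: scaled_profile_def[abs_def] scaled_profile'_def[abs_def])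

lemma sat_profile_minus: "sat_profile P a L (- \<xi>) r = - sat_profile P a L \<xi> r"
  by (simp add: sat_profile_def cutoff_def family_odd arctan_minus)

lemma sat_profile_0: "sat_profile P a L 0 r = 0"
  using sat_profile_minus[of a L 0 r] by simp


lemma scaled_profile_equicontinuous:
  assumes T: "T > 0" and e: "e > 0"
  obtains d where "d > 0"
    "\<And>\<xi> \<eta> \<rho>. \<xi> \<in> cball 0 1 \<Longrightarrow> \<eta> \<in> cball 0 1 \<Longrightarrow> dist \<eta> \<xi> < d \<Longrightarrow> 0 \<le> \<rho> \<Longrightarrow> \<rho> \<le> T\<^sup>2 \<Longrightarrow>
      \<bar>scaled_profile P a L T \<eta> \<rho> - scaled_profile P a L T \<xi> \<rho>\<bar> \<le> e \<and>
      \<bar>scaled_profile' P P' a L T \<eta> \<rho> - scaled_profile' P P' a L T \<xi> \<rho>\<bar> \<le> e"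
proof -
  let ?K = "cball (0::'k) 1 \<times> {0..T\<^sup>2}"
  have K: "compact ?K" by (intro compact_Times) auto
  have "continuous_on UNIV (\<lambda>z. scaled_profile P a L T (fst z) (snd z))"
    unfolding scaled_profile_def using T by (intro continuous_on_sat_profile_comp continuous_intros) auto
  then have "uniformly_continuous_on ?K (\<lambda>z. scaled_profile P a L T (fst z) (snd z))"
    by (rule compact_uniformly_continuous[OF continuous_on_subset K]) auto
  then obtain d1 where d1: "d1 > 0" "\<And>x x'. x \<in> ?K \<Longrightarrow> x' \<in> ?K \<Longrightarrow> dist x' x < d1 \<Longrightarrow>
      dist (scaled_profile P a L T (fst x') (snd x')) (scaled_profile P a L T (fst x) (snd x)) < e"
    using e unfolding uniformly_continuous_on_def by metis
  have "continuous_on UNIV (\<lambda>z. scaled_profile' P P' a L T (fst z) (snd z))"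
    unfolding scaled_profile'_def using T by (intro continuous_on_sat_profile'_comp continuous_intros) auto
  then have "uniformly_continuous_on ?K (\<lambda>z. scaled_profile' P P' a L T (fst z) (snd z))"
    by (rule compact_uniformly_continuous[OF continuous_on_subset K]) auto
  then obtain d2 where d2: "d2 > 0" "\<And>x x'. x \<in> ?K \<Longrightarrow> x' \<in> ?K \<Longrightarrow> dist x' x < d2 \<Longrightarrow>
      dist (scaled_profile' P P' a L T (fst x') (snd x')) (scaled_profile' P P' a L T (fst x) (snd x)) < e"
    using e unfolding uniformly_continuous_on_def by metis
  show ?thesis
  proof (rule that[of "min d1 d2"])
    fix \<xi> \<eta> :: 'k and \<rho> :: real
    assume \<xi>: "\<xi> \<in> cball 0 1" and \<eta>: "\<eta> \<in> cball 0 1" and d: "dist \<eta> \<xi> < min d1 d2"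
      and \<rho>: "0 \<le> \<rho>" "\<rho> \<le> T\<^sup>2"
    have K: "(\<xi>, \<rho>) \<in> ?K" "(\<eta>, \<rho>) \<in> ?K" using \<xi> \<eta> \<rho> by auto
    have dd: "dist (\<eta>, \<rho>) (\<xi>, \<rho>) = dist \<eta> \<xi>" by (simp add: dist_Pair_Pair)
    have "dist (scaled_profile P a L T \<eta> \<rho>) (scaled_profile P a L T \<xi> \<rho>) < e"
      using d1(2)[OF K, simplified] d dd by simp
    moreover have "dist (scaled_profile' P P' a L T \<eta> \<rho>) (scaled_profile' P P' a L T \<xi> \<rho>) < e"
      using d2(2)[OF K, simplified] d dd by simp
    ultimately show "\<bar>scaled_profile P a L T \<eta> \<rho> - scaled_profile P a L T \<xi> \<rho>\<bar> \<le> e \<and>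
      \<bar>scaled_profile' P P' a L T \<eta> \<rho> - scaled_profile' P P' a L T \<xi> \<rho>\<bar> \<le> e"
      by (simp add: dist_real_def)
  qed (use d1 d2 in simp)
qed

lemma cont_H1r_scaled_family:
  assumes T: "T > 0"
  shows "cont_H1r (cball 0 1) (\<lambda>\<xi>. radial_fun (scaled_profile P a L T \<xi>) :: 'a::euclidean_space \<Rightarrow> real)"
  unfolding cont_H1r_def
proof (intro conjI ballI allI impI)
  fix \<xi> :: 'k
  show "radial_fun (scaled_profile P a L T \<xi>) \<in> (H1r :: ('a \<Rightarrow> real) set)"
    by (rule radial_profile.radial_fun_H1r[OF radial_profile_scaled_profile[OF T]])
next
  fix \<xi> :: 'k and \<epsilon> :: real
  assume \<xi>: "\<xi> \<in> cball 0 1" and \<epsilon>: "\<epsilon> > 0"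
  define C where "C = sqrt (measure lborel (cball (0::'a) (sqrt (T\<^sup>2))) * (1 + 4 * T\<^sup>2))"
  have "0 \<le> C" unfolding C_def by (simp add: add_pos_nonneg)
  define e where "e = \<epsilon> / (C + 1)"
  have e: "e > 0" using \<epsilon> \<open>0 \<le> C\<close> by (simp add: e_def)
  have "e * C = \<epsilon> * (C / (C + 1))" by (simp add: e_def)
  also have "\<dots> < \<epsilon> * 1" using \<epsilon> \<open>0 \<le> C\<close> by (intro mult_strict_left_mono) auto
  finally have eC: "e * C < \<epsilon>" by simp
  obtain d where d: "d > 0" "\<And>\<xi> \<eta> \<rho>. \<xi> \<in> cball 0 1 \<Longrightarrow> \<eta> \<in> cball 0 1 \<Longrightarrow> dist \<eta> \<xi> < d \<Longrightarrow> 0 \<le> \<rho> \<Longrightarrow> \<rho> \<le> T\<^sup>2 \<Longrightarrow>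
      \<bar>scaled_profile P a L T \<eta> \<rho> - scaled_profile P a L T \<xi> \<rho>\<bar> \<le> e \<and>
      \<bar>scaled_profile' P P' a L T \<eta> \<rho> - scaled_profile' P P' a L T \<xi> \<rho>\<bar> \<le> e"
    using scaled_profile_equicontinuous[OF T e] by blast
  show "\<exists>\<delta>>0. \<forall>\<eta>\<in>cball 0 1. dist \<eta> \<xi> < \<delta> \<longrightarrow>
          H1norm (\<lambda>x::'a. radial_fun (scaled_profile P a L T \<eta>) x - radial_fun (scaled_profile P a L T \<xi>) x) < \<epsilon>"
  proof (intro exI[of _ d] conjI ballI impI)
    fix \<eta> :: 'k assume \<eta>: "\<eta> \<in> cball 0 1" "dist \<eta> \<xi> < d"
    have "radial_profile (\<lambda>\<rho>. scaled_profile P a L T \<eta> \<rho> - scaled_profile P a L T \<xi> \<rho>)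
        (\<lambda>\<rho>. scaled_profile' P P' a L T \<eta> \<rho> - scaled_profile' P P' a L T \<xi> \<rho>) (T\<^sup>2)"
      by (intro radial_profile_diff radial_profile_scaled_profile T)
    then have "H1norm (radial_fun (\<lambda>\<rho>. scaled_profile P a L T \<eta> \<rho> - scaled_profile P a L T \<xi> \<rho>) :: 'a \<Rightarrow> real)
        \<le> e * C"
      unfolding C_def by (rule radial_profile.H1norm_radial_le) (use T d(2)[OF \<xi> \<eta>] in auto)
    then show "H1norm (\<lambda>x::'a. radial_fun (scaled_profile P a L T \<eta>) x - radial_fun (scaled_profile P a L T \<xi>) x) < \<epsilon>"
      using eC by (simp add: radial_fun_diff)
  qed (use d in simp)
qed

lemma grad_sq_scaled_profile:
  assumes T: "T > 0"
  shows "grad_sq (radial_fun (scaled_profile P a L T \<xi>) :: 'a::euclidean_space \<Rightarrow> real)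
    = T ^ DIM('a) / T\<^sup>2 * (\<integral>y. (norm (radial_grad (sat_profile' P P' a L \<xi>) y :: 'a))\<^sup>2 \<partial>lborel)"
proof -
  interpret unscaled: radial_profile "sat_profile P a L \<xi>" "sat_profile' P P' a L \<xi>" 1
    by (rule radial_profile_sat_profile)
  have rescale: "(norm (radial_grad (scaled_profile' P P' a L T \<xi>) x))\<^sup>2
      = 1 / T\<^sup>2 * (norm (radial_grad (sat_profile' P P' a L \<xi>) ((1/T) *\<^sub>R x)))\<^sup>2" for x :: 'a
  proof -
    have "((1/T) *\<^sub>R x) \<bullet> ((1/T) *\<^sub>R x) = x \<bullet> x / T\<^sup>2" by (simp add: power2_eq_square field_simps)
    then show ?thesis unfolding radial_grad_def scaled_profile'_def
      using T by (simp add: power_mult_distrib power2_eq_square field_simps)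
  qed
  have "grad_sq (radial_fun (scaled_profile P a L T \<xi>) :: 'a \<Rightarrow> real)
      = (\<integral>x. 1 / T\<^sup>2 * (norm (radial_grad (sat_profile' P P' a L \<xi>) ((1/T) *\<^sub>R x) :: 'a))\<^sup>2 \<partial>lborel)"
    unfolding radial_profile.grad_sq_radial[OF radial_profile_scaled_profile[OF T]] rescale ..
  also have "\<dots> = T ^ DIM('a) / T\<^sup>2 * (\<integral>y. (norm (radial_grad (sat_profile' P P' a L \<xi>) y :: 'a))\<^sup>2 \<partial>lborel)"
    by (subst integral_rescale[OF _ T])
       (use T in \<open>auto intro!: borel_measurable_continuous_onI continuous_intros unscaled.continuous_on_radial_grad\<close>)
  finally show ?thesis .
qed

lemma integral_Jpot_scaled_profile:
  assumes T: "T > 0" and g: "continuous_on UNIV g"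
  shows "(\<integral>x. Jpot g lam (radial_fun (scaled_profile P a L T \<xi>) (x::'a::euclidean_space)) \<partial>lborel)
    = T ^ DIM('a) * (\<integral>y. Jpot g lam (radial_fun (sat_profile P a L \<xi>) (y::'a)) \<partial>lborel)"
proof -
  have rescale: "radial_fun (scaled_profile P a L T \<xi>) x = radial_fun (sat_profile P a L \<xi>) ((1/T) *\<^sub>R x)"
    for x :: 'a
    unfolding radial_fun_def scaled_profile_def by (simp add: power2_eq_square field_simps)
  have "continuous_on UNIV (\<lambda>y::'a. Jpot g lam (radial_fun (sat_profile P a L \<xi>) y))"
    by (intro continuous_on_compose2[OF continuous_on_Jpot[OF g]]
        radial_profile.continuous_on_radial_fun[OF radial_profile_sat_profile]) auto
  then show ?thesis
    unfolding rescale by (rule integral_rescale[OF borel_measurable_continuous_onI T])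
qed

lemma Jfun_scaled_profile:
  assumes T: "T > 0" and g: "continuous_on UNIV g"
  shows "Jfun g lam (radial_fun (scaled_profile P a L T \<xi>) :: 'a::euclidean_space \<Rightarrow> real) =
     1/2 * (T ^ DIM('a) / T\<^sup>2) * (\<integral>y. (norm (radial_grad (sat_profile' P P' a L \<xi>) y :: 'a))\<^sup>2 \<partial>lborel)
     + T ^ DIM('a) * (\<integral>y. Jpot g lam (radial_fun (sat_profile P a L \<xi>) (y::'a)) \<partial>lborel)"
proof -
  interpret scaled: radial_profile "scaled_profile P a L T \<xi>" "scaled_profile' P P' a L T \<xi>" "T\<^sup>2"
    by (rule radial_profile_scaled_profile[OF T])
  have "Jfun g lam (radial_fun (scaled_profile P a L T \<xi>) :: 'a \<Rightarrow> real) =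
      1/2 * grad_sq (radial_fun (scaled_profile P a L T \<xi>) :: 'a \<Rightarrow> real)
      + (\<integral>x. Jpot g lam (radial_fun (scaled_profile P a L T \<xi>) (x::'a)) \<partial>lborel)"
    by (rule Jfun_ball_support[OF g scaled.continuous_on_radial_fun, of "sqrt \<bar>T\<^sup>2\<bar>"])
       (use scaled.radial_support in blast)
  then show ?thesis unfolding grad_sq_scaled_profile[OF T] integral_Jpot_scaled_profile[OF T g] by simp
qed


lemma sat_profile_tendsto_sgn:
  assumes \<zeta>: "\<zeta> \<longlonglongrightarrow> l" and L: "filterlim Lq at_top sequentially"
    and r: "0 \<le> r" "r < 1" and nonzero: "P l r \<noteq> 0"
  shows "(\<lambda>n. sat_profile P a (Lq n) (\<zeta> n) r) \<longlonglongrightarrow> a * sgn (P l r)"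
proof -
  let ?c = "flat_exp 0 (1 - r)"
  have c: "?c > 0" using r by (simp add: flat_exp_def)
  have "isCont (\<lambda>\<xi>. P \<xi> r) l"
    using continuous_on_family_comp[of UNIV id "\<lambda>_. r"] by (simp add: continuous_on_eq_continuous_at)
  then have cut: "(\<lambda>n. cutoff P (\<zeta> n) r) \<longlonglongrightarrow> ?c * P l r"
    unfolding cutoff_def by (intro tendsto_mult tendsto_const isCont_tendsto_compose[OF _ \<zeta>])
  have eq: "sat_profile P a (Lq n) (\<zeta> n) r = a * (2/pi) * arctan (cutoff P (\<zeta> n) r * Lq n)" for n
    by (simp add: sat_profile_def mult.commute)
  show ?thesis
  proof (cases "P l r > 0")
    case True
    have "filterlim (\<lambda>n. cutoff P (\<zeta> n) r * Lq n) at_top sequentially"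
      by (rule filterlim_tendsto_pos_mult_at_top[OF cut _ L]) (use c True in simp)
    then have "(\<lambda>n. arctan (cutoff P (\<zeta> n) r * Lq n)) \<longlonglongrightarrow> pi/2"
      by (rule filterlim_compose[OF tendsto_arctan_at_top])
    then have "(\<lambda>n. a * (2/pi) * arctan (cutoff P (\<zeta> n) r * Lq n)) \<longlonglongrightarrow> a * (2/pi) * (pi/2)"
      by (intro tendsto_intros)
    then show ?thesis unfolding eq using True by simp
  next
    case False
    then have neg: "P l r < 0" using nonzero by simp
    have "filterlim (\<lambda>n. cutoff P (\<zeta> n) r * Lq n) at_bot sequentially"
      by (rule filterlim_tendsto_neg_mult_at_bot[OF cut _ L]) (use c neg in \<open>simp add: mult_pos_neg\<close>)
    then have "(\<lambda>n. arctan (cutoff P (\<zeta> n) r * Lq n)) \<longlonglongrightarrow> - (pi/2)"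
      by (rule filterlim_compose[OF tendsto_arctan_at_bot])
    then have "(\<lambda>n. a * (2/pi) * arctan (cutoff P (\<zeta> n) r * Lq n)) \<longlonglongrightarrow> a * (2/pi) * (- (pi/2))"
      by (intro tendsto_intros)
    then show ?thesis unfolding eq using neg by simp
  qed
qed

lemma Jpot_sat_profile_tendsto:
  assumes g: "continuous_on UNIV g" and \<zeta>: "\<zeta> \<longlonglongrightarrow> l" and L: "filterlim Lq at_top sequentially"
    and r: "0 \<le> r" "r < 1" "P l r \<noteq> 0" and sgn: "Jpot g lam (a * sgn (P l r)) = Jpot g lam a"
  shows "(\<lambda>n. Jpot g lam (sat_profile P a (Lq n) (\<zeta> n) r)) \<longlonglongrightarrow> Jpot g lam a"
proof -
  have "isCont (Jpot g lam) (a * sgn (P l r))"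
    using continuous_on_Jpot[OF g, of UNIV] by (simp add: continuous_on_eq_continuous_at)
  from isCont_tendsto_compose[OF this sat_profile_tendsto_sgn[OF \<zeta> L r]] show ?thesis
    unfolding sgn .
qed

lemma integral_Jpot_sat_profile_tendsto:
  assumes g: "continuous_on UNIV g" and \<zeta>: "\<zeta> \<longlonglongrightarrow> l" and L: "filterlim Lq at_top sequentially"
    and nonzero: "AE y in lborel. (y::'a::euclidean_space) \<bullet> y < 1 \<longrightarrow> P l (y \<bullet> y) \<noteq> 0"
    and sgn: "\<And>r. 0 \<le> r \<Longrightarrow> r < 1 \<Longrightarrow> P l r \<noteq> 0 \<Longrightarrow> Jpot g lam (a * sgn (P l r)) = Jpot g lam a"
  shows "(\<lambda>n. \<integral>y. Jpot g lam (radial_fun (sat_profile P a (Lq n) (\<zeta> n)) (y::'a)) \<partial>lborel)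
    \<longlonglongrightarrow> Jpot g lam a * measure lborel (ball (0::'a) 1)"
proof -
  obtain C where C: "C \<ge> 0" "\<And>t. \<bar>t\<bar> \<le> \<bar>a\<bar> \<Longrightarrow> \<bar>Jpot g lam t\<bar> \<le> C"
    using Jpot_bounded[OF g] by blast
  have outside: "radial_fun (sat_profile P a L' \<zeta>') y = 0" if "\<not> y \<bullet> y < 1" for L' \<zeta>' and y :: 'a
    using sat_profile_support[of "y \<bullet> y" P a L' \<zeta>'] that by (simp add: radial_fun_def)
  have "(\<lambda>n. \<integral>y. Jpot g lam (radial_fun (sat_profile P a (Lq n) (\<zeta> n)) (y::'a)) \<partial>lborel) \<longlonglongrightarrow>
      (\<integral>y. Jpot g lam a * indicator (ball (0::'a) 1) y \<partial>lborel)"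
  proof (rule integral_dominated_convergence[where w="\<lambda>y::'a. C * indicator (ball 0 1) y"])
    show "(\<lambda>y::'a. Jpot g lam a * indicator (ball 0 1) y) \<in> borel_measurable lborel"
      by (intro borel_measurable_times borel_measurable_const borel_measurable_indicator) simp
    show "(\<lambda>y::'a. Jpot g lam (radial_fun (sat_profile P a (Lq n) (\<zeta> n)) y)) \<in> borel_measurable lborel" for n
    proof -
      have "continuous_on UNIV (\<lambda>y::'a. Jpot g lam (radial_fun (sat_profile P a (Lq n) (\<zeta> n)) y))"
        by (intro continuous_on_compose2[OF continuous_on_Jpot[OF g]]
            radial_profile.continuous_on_radial_fun[OF radial_profile_sat_profile]) auto
      then show ?thesis using borel_measurable_continuous_onI by simp
    qed
    show "integrable lborel (\<lambda>y::'a. C * indicator (ball 0 1) y)"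
      using emeasure_bounded_finite[OF bounded_ball[of "0::'a" 1]] by (simp add: integrable_indicator_iff)
    show "AE y in lborel. norm (Jpot g lam (radial_fun (sat_profile P a (Lq n) (\<zeta> n)) (y::'a)))
        \<le> C * indicator (ball 0 1) y" for n
    proof (rule AE_I2)
      fix y :: 'a
      have "\<bar>radial_fun (sat_profile P a (Lq n) (\<zeta> n)) y\<bar> \<le> \<bar>a\<bar>"
        unfolding radial_fun_def by (rule abs_sat_profile_le)
      then show "norm (Jpot g lam (radial_fun (sat_profile P a (Lq n) (\<zeta> n)) y)) \<le> C * indicator (ball 0 1) y"
        using C outside[of y] inner_self_less_one_iff[of y] by (auto split: split_indicator)
    qed
    show "AE y in lborel. (\<lambda>n. Jpot g lam (radial_fun (sat_profile P a (Lq n) (\<zeta> n)) (y::'a)))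
        \<longlonglongrightarrow> Jpot g lam a * indicator (ball 0 1) y"
      using nonzero
    proof eventually_elim
      case (elim y)
      then show ?case
        using Jpot_sat_profile_tendsto[OF g \<zeta> L _ _ _ sgn, of "y \<bullet> y"] outside[of y] inner_self_less_one_iff[of y]
        by (cases "y \<bullet> y < 1") (simp_all add: radial_fun_def)
    qed
  qed
  then show ?thesis by simp
qed

text \<open>By compactness of \<open>K\<close>, the limit of the previous lemma is approached uniformly in \<open>\<xi>\<close>,
  up to a factor 1/2.\<close>

lemma integral_Jpot_sat_profile_uniform:
  fixes K :: "'k set"
  assumes g: "continuous_on UNIV g" and K: "compact K"
    and nonzero: "\<And>\<xi>. \<xi> \<in> K \<Longrightarrow> AE y in lborel. (y::'a::euclidean_space) \<bullet> y < 1 \<longrightarrow> P \<xi> (y \<bullet> y) \<noteq> 0"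
    and sgn: "\<And>\<xi> r. \<xi> \<in> K \<Longrightarrow> 0 \<le> r \<Longrightarrow> r < 1 \<Longrightarrow> P \<xi> r \<noteq> 0 \<Longrightarrow> Jpot g lam (a * sgn (P \<xi> r)) = Jpot g lam a"
    and neg: "Jpot g lam a < 0"
  obtains L where "\<And>\<xi>. \<xi> \<in> K \<Longrightarrow>
    (\<integral>y. Jpot g lam (radial_fun (sat_profile P a L \<xi>) (y::'a)) \<partial>lborel) \<le> Jpot g lam a * measure lborel (ball (0::'a) 1) / 2"
proof -
  define V where "V = measure lborel (ball (0::'a) 1)"
  define B where "B L \<xi> = (\<integral>y. Jpot g lam (radial_fun (sat_profile P a L \<xi>) (y::'a)) \<partial>lborel)" for L \<xi>
  have "V > 0" unfolding V_def by (rule content_ball_pos) simp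
  have "\<exists>L. \<forall>\<xi>\<in>K. B L \<xi> \<le> Jpot g lam a * V / 2"
  proof (rule ccontr)
    assume "\<nexists>L. \<forall>\<xi>\<in>K. B L \<xi> \<le> Jpot g lam a * V / 2"
    then have "\<forall>n. \<exists>\<xi>. \<xi> \<in> K \<and> Jpot g lam a * V / 2 < B (real n) \<xi>"
      by (auto simp: not_le)
    from choice[OF this] obtain \<xi> where \<xi>: "\<And>n. \<xi> n \<in> K" "\<And>n. Jpot g lam a * V / 2 < B (real n) (\<xi> n)"
      by blast
    obtain l r where l: "l \<in> K" and r: "strict_mono r" and lim: "(\<xi> \<circ> r) \<longlonglongrightarrow> l"
      using seq_compactE[OF compact_imp_seq_compact[OF K], of \<xi>] \<xi>(1) by blast
    have "filterlim (\<lambda>n. real (r n)) at_top sequentially"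
      by (rule filterlim_compose[OF filterlim_real_sequentially filterlim_subseq[OF r]])
    from integral_Jpot_sat_profile_tendsto[OF g lim[unfolded comp_def] this nonzero[OF l] sgn[OF l]]
    have "(\<lambda>n. B (real (r n)) (\<xi> (r n))) \<longlonglongrightarrow> Jpot g lam a * V"
      unfolding B_def V_def by simp
    moreover have "Jpot g lam a * V / 2 \<le> B (real (r n)) (\<xi> (r n))" for n
      using \<xi>(2)[of "r n"] by simp
    ultimately have "Jpot g lam a * V / 2 \<le> Jpot g lam a * V"
      by (intro LIMSEQ_le_const) blast+
    then show False using neg \<open>V > 0\<close> by (simp add: mult_neg_pos)
  qed
  then show ?thesis using that unfolding B_def V_def by blast
qed

lemma integral_radial_grad_sat_profile_bounded:
  "\<exists>M. \<forall>\<xi>\<in>cball 0 1.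
    (\<integral>y. (norm (radial_grad (sat_profile' P P' a L \<xi>) y :: 'a::euclidean_space))\<^sup>2 \<partial>lborel) \<le> M"
proof -
  let ?K = "cball (0::'k) 1 \<times> {0..1::real}"
  have "compact ((\<lambda>z. sat_profile' P P' a L (fst z) (snd z)) ` ?K)"
    by (intro compact_continuous_image continuous_on_sat_profile'_comp continuous_intros compact_Times) auto
  then obtain M0 where M0: "\<forall>y\<in>(\<lambda>z. sat_profile' P P' a L (fst z) (snd z)) ` ?K. norm y \<le> M0"
    using compact_imp_bounded bounded_iff by metis
  have "\<bar>sat_profile' P P' a L \<xi> r\<bar> \<le> M0" if "\<xi> \<in> cball 0 1" "0 \<le> r" "r \<le> 1" for \<xi> r
  proof -
    have "(\<xi>, r) \<in> ?K" using that by simp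
    then show ?thesis using M0 by fastforce
  qed
  then have "(\<integral>y. (norm (radial_grad (sat_profile' P P' a L \<xi>) y :: 'a))\<^sup>2 \<partial>lborel)
      \<le> 4 * 1 * M0\<^sup>2 * measure lborel (cball (0::'a) (sqrt 1))" if "\<xi> \<in> cball 0 1" for \<xi>
    using that by (intro radial_profile.integral_radial_grad_sq_le[OF radial_profile_sat_profile]) auto
  then show ?thesis by blast
qed

lemma exists_scaled_family_Jfun_neg:
  fixes K :: "'k set"
  assumes g: "continuous_on UNIV g" and K: "compact K" "K \<subseteq> cball 0 1"
    and nonzero: "\<And>\<xi>. \<xi> \<in> K \<Longrightarrow> AE y in lborel. (y::'a::euclidean_space) \<bullet> y < 1 \<longrightarrow> P \<xi> (y \<bullet> y) \<noteq> 0"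
    and sgn: "\<And>\<xi> r. \<xi> \<in> K \<Longrightarrow> 0 \<le> r \<Longrightarrow> r < 1 \<Longrightarrow> P \<xi> r \<noteq> 0 \<Longrightarrow> Jpot g lam (a * sgn (P \<xi> r)) = Jpot g lam a"
    and neg: "Jpot g lam a < 0"
  obtains L T where "T > 0" "\<And>\<xi>. \<xi> \<in> K \<Longrightarrow> Jfun g lam (radial_fun (scaled_profile P a L T \<xi>) :: 'a \<Rightarrow> real) < 0"
proof -
  define \<beta> where "\<beta> = - (Jpot g lam a * measure lborel (ball (0::'a) 1) / 2)"
  have "\<beta> > 0" using neg content_ball_pos[of 1 "0::'a"] by (simp add: \<beta>_def mult_neg_pos)
  obtain L where B: "\<And>\<xi>. \<xi> \<in> K \<Longrightarrow> (\<integral>y. Jpot g lam (radial_fun (sat_profile P a L \<xi>) (y::'a)) \<partial>lborel) \<le> - \<beta>"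
    using integral_Jpot_sat_profile_uniform[OF g K(1) nonzero sgn neg] unfolding \<beta>_def by auto
  obtain M0 where M0: "\<And>\<xi>. \<xi> \<in> cball 0 1 \<Longrightarrow>
      (\<integral>y. (norm (radial_grad (sat_profile' P P' a L \<xi>) y :: 'a))\<^sup>2 \<partial>lborel) \<le> M0"
    using integral_radial_grad_sat_profile_bounded[where a=a and L=L] by blast
  define M where "M = max M0 0"
  obtain T where "T > 0" and small: "M / (2 * T\<^sup>2) < \<beta>"
    using exists_scale_small[of M \<beta>] \<open>\<beta> > 0\<close> by (auto simp: M_def)
  have "Jfun g lam (radial_fun (scaled_profile P a L T \<xi>) :: 'a \<Rightarrow> real) < 0" if "\<xi> \<in> K" for \<xi>
  proof -
    let ?A = "\<integral>y. (norm (radial_grad (sat_profile' P P' a L \<xi>) y :: 'a))\<^sup>2 \<partial>lborel"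
    let ?B = "\<integral>y. Jpot g lam (radial_fun (sat_profile P a L \<xi>) (y::'a)) \<partial>lborel"
    have "Jfun g lam (radial_fun (scaled_profile P a L T \<xi>) :: 'a \<Rightarrow> real) = 1/2 * (T ^ DIM('a) / T\<^sup>2) * ?A + T ^ DIM('a) * ?B"
      by (rule Jfun_scaled_profile[OF \<open>T > 0\<close> g])
    also have "\<dots> \<le> 1/2 * (T ^ DIM('a) / T\<^sup>2) * M + T ^ DIM('a) * (- \<beta>)"
      using M0[of \<xi>] B[OF that] K(2) that \<open>T > 0\<close> unfolding M_def by (intro add_mono mult_left_mono) auto
    also have "\<dots> = T ^ DIM('a) * (M / (2 * T\<^sup>2) - \<beta>)" by (simp add: field_simps)
    also have "\<dots> < 0" using \<open>T > 0\<close> small by (simp add: mult_pos_neg)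
    finally show ?thesis .
  qed
  with \<open>T > 0\<close> show ?thesis by (rule that)
qed

end

section \<open>The classes \<open>\<Gamma>\<^sub>k\<close> are nonempty\<close>

lemma cont_H1r_subset: "cont_H1r D \<gamma> \<Longrightarrow> D' \<subseteq> D \<Longrightarrow> cont_H1r D' \<gamma>"
  unfolding cont_H1r_def by (meson subsetD)

lemma Gamma1_nonempty:
  assumes g: "continuous_on UNIV g" and neg: "Jpot g lam a < 0"
  shows "(Gamma1 g lam :: (real \<Rightarrow> 'a::euclidean_space \<Rightarrow> real) set) \<noteq> {}"
proof -
  interpret odd_family "\<lambda>(t::real) (r::real). t" "\<lambda>t r. 0"
    by unfold_locales (auto intro!: continuous_intros derivative_eq_intros)
  obtain L T where T: "T > 0"
    and J: "Jfun g lam (radial_fun (scaled_profile (\<lambda>t r. t) a L T 1) :: 'a \<Rightarrow> real) < 0"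
    by (rule exists_scaled_family_Jfun_neg[OF g compact_sing[of "1::real"] _ _ _ neg]) auto
  define \<gamma> where "\<gamma> = (\<lambda>\<xi>::real. radial_fun (scaled_profile (\<lambda>t r. t) a L T \<xi>) :: 'a \<Rightarrow> real)"
  have "cont_H1r {0..1} \<gamma>"
    unfolding \<gamma>_def by (rule cont_H1r_subset[OF cont_H1r_scaled_family[OF T]]) auto
  moreover have "\<gamma> 0 = (\<lambda>x. 0)"
    unfolding \<gamma>_def radial_fun_def[abs_def] scaled_profile_def using sat_profile_0 by simp
  ultimately have "\<gamma> \<in> Gamma1 g lam" unfolding Gamma1_def using J by (simp add: \<gamma>_def)
  then show ?thesis by blast
qed

definition poly_family :: "(nat \<Rightarrow> 'k) \<Rightarrow> 'k::euclidean_space \<Rightarrow> real \<Rightarrow> real" where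
  "poly_family e \<xi> r = (\<Sum>j<DIM('k). (\<xi> \<bullet> e j) * r ^ j)"

definition poly_family' :: "(nat \<Rightarrow> 'k) \<Rightarrow> 'k::euclidean_space \<Rightarrow> real \<Rightarrow> real" where
  "poly_family' e \<xi> r = (\<Sum>j<DIM('k). (\<xi> \<bullet> e j) * (real j * r ^ (j - 1)))"

lemma odd_family_poly_family: "odd_family (poly_family e) (poly_family' e)"
proof
  show "(poly_family e \<xi> has_real_derivative poly_family' e \<xi> r) (at r)" for \<xi> r
    unfolding poly_family_def poly_family'_def by (intro DERIV_sum DERIV_cmult) (simp add: DERIV_pow)
  show "continuous_on UNIV (\<lambda>z. poly_family e (fst z) (snd z))"
    unfolding poly_family_def by (intro continuous_intros)
  show "continuous_on UNIV (\<lambda>z. poly_family' e (fst z) (snd z))"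
    unfolding poly_family'_def by (intro continuous_intros)
  show "poly_family e (- \<xi>) r = - poly_family e \<xi> r" for \<xi> r
    unfolding poly_family_def by (simp add: sum_negf)
qed

lemma sphere_null_sets: "sphere (c::'a::euclidean_space) r \<in> null_sets lborel"
  using negligible_sphere[of c r]
  by (auto simp: null_sets_completion_iff negligible_iff_null_sets negligible_convex_frontier)

lemma poly_family_AE_nonzero:
  assumes e: "bij_betw e {..<DIM('k)} (Basis :: 'k::euclidean_space set)" and "\<xi> \<noteq> 0"
  shows "AE y in lborel. poly_family e \<xi> ((y::'a::euclidean_space) \<bullet> y) \<noteq> 0"
proof -
  obtain b where b: "b \<in> Basis" "\<xi> \<bullet> b \<noteq> 0" using \<open>\<xi> \<noteq> 0\<close> euclidean_all_zero_iff by blast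
  have "b \<in> e ` {..<DIM('k)}" using e b(1) by (simp add: bij_betw_def)
  then obtain i where i: "i < DIM('k)" "e i = b" by auto
  define Z where "Z = {r. poly_family e \<xi> r = 0}"
  have "{..<DIM('k)} = {..DIM('k) - 1}" using DIM_positive[where 'a='k] by (cases "DIM('k)") (auto simp: lessThan_Suc_atMost)
  then have "finite Z" unfolding Z_def poly_family_def
    by (simp only:) (rule polyfun_roots_finite[of _ i], use b i in auto)
  then have "(\<Union>r\<in>Z. sphere (0::'a) (sqrt r)) \<in> null_sets lborel"
    by (intro null_sets_UN' countable_finite sphere_null_sets)
  then have "AE y in lborel. y \<notin> (\<Union>r\<in>Z. sphere (0::'a) (sqrt r))" by (rule AE_not_in)
  then show ?thesis
    by (rule AE_mp) (auto intro!: AE_I2 simp: Z_def norm_eq_sqrt_inner)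
qed

lemma Gammak_nonempty:
  assumes g: "continuous_on UNIV g" and odd: "\<forall>s. g (- s) = - g s" and neg: "Jpot g lam a < 0"
  shows "(Gammak g lam :: ('k::euclidean_space \<Rightarrow> 'a::euclidean_space \<Rightarrow> real) set) \<noteq> {}"
proof -
  obtain e where e: "bij_betw e {..<DIM('k)} (Basis :: 'k set)"
    using ex_bij_betw_nat_finite[OF finite_Basis] by (auto simp: lessThan_atLeast0)
  interpret odd_family "poly_family e" "poly_family' e" by (rule odd_family_poly_family)
  have sgn: "Jpot g lam (a * sgn (poly_family e \<xi> r)) = Jpot g lam a" if "poly_family e \<xi> r \<noteq> 0" for \<xi> r
    using that Jpot_minus[OF g odd, of lam a] by (cases "poly_family e \<xi> r > 0") (auto simp: sgn_if)
  have nonzero: "AE y in lborel. (y::'a) \<bullet> y < 1 \<longrightarrow> poly_family e \<xi> (y \<bullet> y) \<noteq> 0"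
    if "\<xi> \<in> sphere 0 1" for \<xi>
  proof -
    have "\<xi> \<noteq> 0" using that by auto
    from poly_family_AE_nonzero[OF e this] show ?thesis by (rule eventually_mono) simp
  qed
  obtain L T where T: "T > 0" and J: "\<And>\<xi>. \<xi> \<in> sphere (0::'k) 1 \<Longrightarrow>
      Jfun g lam (radial_fun (scaled_profile (poly_family e) a L T \<xi>) :: 'a \<Rightarrow> real) < 0"
    using exists_scaled_family_Jfun_neg[OF g compact_sphere sphere_cball nonzero sgn neg] by blast
  define \<gamma> where "\<gamma> = (\<lambda>\<xi>::'k. radial_fun (scaled_profile (poly_family e) a L T \<xi>) :: 'a \<Rightarrow> real)"
  have "cont_H1r (cball 0 1) \<gamma>" unfolding \<gamma>_def by (rule cont_H1r_scaled_family[OF T])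
  moreover have "\<gamma> (- \<xi>) = (\<lambda>x. - \<gamma> \<xi> x)" for \<xi>
    unfolding \<gamma>_def radial_fun_def[abs_def] scaled_profile_def using sat_profile_minus by simp
  ultimately have "\<gamma> \<in> Gammak g lam" unfolding Gammak_def using J by (simp add: \<gamma>_def)
  then show ?thesis by blast
qed

text \<open>The growth conditions (g2), (g3) and the dimension bounds are needed for the variational
  theory of the paper, not for the nonemptiness of \<open>\<Gamma>\<^sub>k\<close>: the paths constructed above consist
  of bounded, compactly supported functions.\<close>

theorem lemma3p1:
  fixes g :: "real \<Rightarrow> real" and lam :: real
  assumes N2: "DIM('a::euclidean_space) \<ge> 2"
    and g1: "continuous_on UNIV g"
    and g2: "((\<lambda>s. g s / s) \<longlongrightarrow> 0) (at 0)"
    and g3: "((\<lambda>s. \<bar>g s\<bar> / \<bar>s\<bar> powr (4 + 4 / real DIM('a) - 1)) \<longlongrightarrow> 0) at_infinity"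
    and g4: "\<exists>s0>0. Gprim g s0 > 0"
    and lam: "ereal lam < lambda0 g"
  shows "(Gamma1 g lam :: (real \<Rightarrow> 'a \<Rightarrow> real) set) \<noteq> {} \<and>
         ((\<forall>s. g (- s) = - g s) \<longrightarrow> DIM('k::euclidean_space) \<ge> 2 \<longrightarrow>
           (Gammak g lam :: ('k \<Rightarrow> 'a \<Rightarrow> real) set) \<noteq> {})"
proof -
  obtain a where "Jpot g lam a < 0" by (rule exists_Jpot_neg[OF g4 lam])
  then show ?thesis using Gamma1_nonempty[OF g1] Gammak_nonempty[OF g1] by blast
qed

end
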